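(* Let $(\mathcal A,\mathbb E)$ be a $B$-valued probability space and $a,b\in\mathcal A$ free. Let $n\ge1$ and let $\tau\in Y_{2n}$ be a tree that does not split. Then for all $x_1,y_1,\dots,x_n,y_n\in B$, $$\kappa_\tau(x_1a,\,y_1b,\,x_2a,\,y_2b,\,\dots,\,x_na,\,y_nb)=0.$$
   Context: $B$ is a unital algebra over a field $\mathbb K$ of characteristic zero. $B$-valued probability space $(\mathcal A,\mathbb E)$: $\mathcal A$ a unital $\mathbb K$-algebra and $B$-bimodule with all mixed triple products associative; $\mathbb E:\mathcal A\to B$ linear, unital, $\mathbb E(xay)=x\mathbb E(a)y$. Freeness of $a,b$: for the $B$-subalgebras $\mathcal A_1,\mathcal A_2$ they generate, $\mathbb E(a_1\cdots a_n)=0$ whenever $n\ge1$, each $\mathbb E(a_i)=0$, $a_i\in\mathcal A_{j_i}$, $j_i\neq j_{i+1}$. Planar binary trees: $Y_0=\{|\}$, $Y_n=\{\sigma\vee\tau:|\sigma|+|\tau|=n-1\}$ ($\sigma\vee\tau$: root with left subtree $\sigma$, right subtree $\tau$); vertices numbered $1,\dots,n$ in left-to-right order (left subtree, root, right subtree). Each $\tau\in Y_n$, $n\ge1$, is uniquely $\tau_1\vee(\tau_2\vee(\cdots\vee(\tau_k\vee|)))$; $j_i=|\tau_1|+\dots+|\tau_i|+i$. A right arm is a class of the equivalence relation generated by "$x$ is the right child of $y$"; $\tau$ splits if every right arm consists of numbers of the same parity. Cumulants: multilinear $\kappa_n:\mathcal A^n\to B$ defined recursively by $\mathbb E(a_1\cdots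 a_n)=\sum_{\tau\in Y_n}\kappa_\tau(a_1,\dots,a_n)$, with $\kappa_|=1$ and $\kappa_\tau(a_1,\dots,a_n)=\kappa_k(\kappa_{\tau_1}(a_1,\dots,a_{j_1-1})a_{j_1},\dots,\kappa_{\tau_k}(a_{j_{k-1}+1},\dots,a_{j_k-1})a_{j_k})$. *)

theory Defs
  imports Main "HOL.Vector_Spaces"
begin

definition k_algebra :: "('k::field_char_0 \<Rightarrow> 'r::ring_1 \<Rightarrow> 'r) \<Rightarrow> bool" where
  "k_algebra sm \<longleftrightarrow> vector_space sm \<and>
     (\<forall>c x y. sm c (x * y) = sm c x * y \<and> sm c (x * y) = x * sm c y)"

text \<open>B is the type 'b with scalar action smB;
A is the type 'a with scalar action smA; lact x a = x a and ract a x = a x are the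
bimodule actions; E is the conditional expectation.\<close>
definition B_prob_space ::
  "('k::field_char_0 \<Rightarrow> 'b::ring_1 \<Rightarrow> 'b) \<Rightarrow> ('k \<Rightarrow> 'a::ring_1 \<Rightarrow> 'a) \<Rightarrow>
   ('b \<Rightarrow> 'a \<Rightarrow> 'a) \<Rightarrow> ('a \<Rightarrow> 'b \<Rightarrow> 'a) \<Rightarrow> ('a \<Rightarrow> 'b) \<Rightarrow> bool" where
  "B_prob_space smB smA lact ract E \<longleftrightarrow>
     k_algebra smB \<and> k_algebra smA \<and>
     \<comment> \<open>unital K-bimodule structure\<close>
     (\<forall>x a b. lact x (a + b) = lact x a + lact x b) \<and>
     (\<forall>x y a. lact (x + y) a = lact x a + lact y a) \<and>
     (\<forall>x a b. ract (a + b) x = ract a x + ract b x) \<and>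
     (\<forall>x y a. ract a (x + y) = ract a x + ract a y) \<and>
     (\<forall>c x a. lact (smB c x) a = smA c (lact x a) \<and> lact x (smA c a) = smA c (lact x a)) \<and>
     (\<forall>c x a. ract a (smB c x) = smA c (ract a x) \<and> ract (smA c a) x = smA c (ract a x)) \<and>
     (\<forall>a. lact 1 a = a) \<and> (\<forall>a. ract a 1 = a) \<and>
     \<comment> \<open>all mixed triple products associative\<close>
     (\<forall>x y a. lact (x * y) a = lact x (lact y a)) \<and>
     (\<forall>x y a. ract a (x * y) = ract (ract a x) y) \<and>
     (\<forall>x y a. lact x (ract a y) = ract (lact x a) y) \<and>
     (\<forall>x a b. lact x (a * b) = lact x a * b) \<and>
     (\<forall>x a b. ract (a * b) x = a * ract b x) \<and>
     (\<forall>x a b. ract a x * b = a * lact x b) \<and>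
     \<comment> \<open>the expectation\<close>
     (\<forall>a b. E (a + b) = E a + E b) \<and>
     (\<forall>c a. E (smA c a) = smB c (E a)) \<and>
     E 1 = 1 \<and>
     (\<forall>x a y. E (lact x (ract a y)) = x * E a * y)"

inductive_set B_gen ::
  "('k \<Rightarrow> 'a::ring_1 \<Rightarrow> 'a) \<Rightarrow> ('b \<Rightarrow> 'a \<Rightarrow> 'a) \<Rightarrow> ('a \<Rightarrow> 'b \<Rightarrow> 'a) \<Rightarrow> 'a \<Rightarrow> 'a set"
  for smA lact ract a where
    gen_elem: "a \<in> B_gen smA lact ract a"
  | gen_one: "1 \<in> B_gen smA lact ract a"
  | gen_add: "u \<in> B_gen smA lact ract a \<Longrightarrow> v \<in> B_gen smA lact ract a \<Longrightarrow> u + v \<in> B_gen smA lact ract a"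
  | gen_mult: "u \<in> B_gen smA lact ract a \<Longrightarrow> v \<in> B_gen smA lact ract a \<Longrightarrow> u * v \<in> B_gen smA lact ract a"
  | gen_scale: "u \<in> B_gen smA lact ract a \<Longrightarrow> smA c u \<in> B_gen smA lact ract a"
  | gen_lact: "u \<in> B_gen smA lact ract a \<Longrightarrow> lact x u \<in> B_gen smA lact ract a"
  | gen_ract: "u \<in> B_gen smA lact ract a \<Longrightarrow> ract u x \<in> B_gen smA lact ract a"

definition free_pair ::
  "('k \<Rightarrow> 'a::ring_1 \<Rightarrow> 'a) \<Rightarrow> ('b \<Rightarrow> 'a \<Rightarrow> 'a) \<Rightarrow> ('a \<Rightarrow> 'b \<Rightarrow> 'a) \<Rightarrow> ('a \<Rightarrow> 'b::zero) \<Rightarrow>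
   'a \<Rightarrow> 'a \<Rightarrow> bool" where
  "free_pair smA lact ract E a b \<longleftrightarrow>
     (\<forall>w :: (bool \<times> 'a) list.
        w \<noteq> [] \<longrightarrow>
        (\<forall>(j, z) \<in> set w. E z = 0 \<and> z \<in> B_gen smA lact ract (if j then a else b)) \<longrightarrow>
        (\<forall>i. Suc i < length w \<longrightarrow> fst (w ! i) \<noteq> fst (w ! Suc i)) \<longrightarrow>
        E (prod_list (map snd w)) = 0)"

datatype ptree = Leaf | Node ptree ptree  \<comment> \<open>Node l r = l \<or> r\<close>

fun tsize :: "ptree \<Rightarrow> nat" where
  "tsize Leaf = 0"
| "tsize (Node l r) = tsize l + 1 + tsize r"

definition Y :: "nat \<Rightarrow> ptree set" where
  "Y n = {t. tsize t = n}"

text \<open>rchild off t x y: inside the tree t whose vertices are numbered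
off+1, ..., off + tsize t in left-to-right order (left subtree, root, right
subtree), vertex x is the right child of vertex y.\<close>
fun rchild :: "nat \<Rightarrow> ptree \<Rightarrow> nat \<Rightarrow> nat \<Rightarrow> bool" where
  "rchild off Leaf x y = False"
| "rchild off (Node l r) x y =
     ((case r of Leaf \<Rightarrow> False
       | Node rl rr \<Rightarrow> y = off + tsize l + 1 \<and> x = off + tsize l + 1 + tsize rl + 1)
      \<or> rchild off l x y \<or> rchild (off + tsize l + 1) r x y)"

text \<open>Right arms are the classes of the equivalence relation (on the vertex set
{1..n}) generated by "x is the right child of y"; t splits iff each right arm
consists of numbers of the same parity.\<close>
definition splits :: "ptree \<Rightarrow> bool" where
  "splits t \<longleftrightarrow>
     (\<forall>x \<in> {1..tsize t}. \<forall>y.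
        (sup (rchild 0 t) (rchild 0 t)\<inverse>\<inverse>)\<^sup>*\<^sup>* x y \<longrightarrow> (even x \<longleftrightarrow> even y))"

text \<open>For t = t_1 \<or> (t_2 \<or> (... \<or> (t_k \<or> |))), spine_args gives the list
  kappa_{t_1}(a_1,...,a_{j_1-1}) a_{j_1}, ..., kappa_{t_k}(...) a_{j_k},
with kappa_| = 1.\<close>
primrec spine_args :: "('b::one \<Rightarrow> 'a \<Rightarrow> 'a) \<Rightarrow> ('a list \<Rightarrow> 'b) \<Rightarrow> ptree \<Rightarrow> 'a list \<Rightarrow> 'a list" where
  "spine_args lact \<kappa> Leaf as = []"
| "spine_args lact \<kappa> (Node l r) as =
     lact (case l of Leaf \<Rightarrow> 1 | Node _ _ \<Rightarrow> \<kappa> (spine_args lact \<kappa> l (take (tsize l) as)))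
          (as ! tsize l)
     # spine_args lact \<kappa> r (drop (tsize l + 1) as)"

text \<open>kappa_t(a_1, ..., a_n), given the family of cumulants kappa (kappa applied to
a list of length k is kappa_k).\<close>
definition kappa_tree :: "('b::one \<Rightarrow> 'a \<Rightarrow> 'a) \<Rightarrow> ('a list \<Rightarrow> 'b) \<Rightarrow> ptree \<Rightarrow> 'a list \<Rightarrow> 'b" where
  "kappa_tree lact \<kappa> t as = (case t of Leaf \<Rightarrow> 1 | Node _ _ \<Rightarrow> \<kappa> (spine_args lact \<kappa> t as))"

definition is_cumulants :: "('b::ring_1 \<Rightarrow> 'a::ring_1 \<Rightarrow> 'a) \<Rightarrow> ('a \<Rightarrow> 'b) \<Rightarrow> ('a list \<Rightarrow> 'b) \<Rightarrow> bool" where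
  "is_cumulants lact E \<kappa> \<longleftrightarrow>
     (\<forall>as. E (prod_list as) = (\<Sum>t \<in> Y (length as). kappa_tree lact \<kappa> t as))"

end

theory Submission
  imports Defs
begin

text \<open>Cumulants are not assumed multilinear: the tree recursion is first shown to be
  equivalent to the moment-cumulant formula
  \<open>E(a\<^sub>1 \<cdots> a\<^sub>n) = \<Sum> \<kappa>\<^sub>k(E(a\<^sub>1 \<cdots> a\<^sub>j\<^sub>1\<^sub>-\<^sub>1) a\<^sub>j\<^sub>1, \<dots>, E(a\<^sub>j\<^sub>k\<^sub>-\<^sub>1\<^sub>+\<^sub>1 \<cdots> a\<^sub>n\<^sub>-\<^sub>1) a\<^sub>n)\<close>
  (sum over \<open>j\<^sub>1 < \<dots> < j\<^sub>k = n\<close>), from which additivity and left \<open>B\<close>-linearity of \<open>\<kappa>\<close>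
  follow by induction. Comparing the expansions of \<open>E(\<cdots> v z \<cdots>)\<close> with \<open>v z\<close> read as one letter
  or as two gives the formula for products as arguments: \<open>\<kappa>(\<dots>, v z, \<dots>)\<close> is
  \<open>\<kappa>(\<dots>, v, z, \<dots>)\<close> plus terms in which a cumulant ending with \<open>v\<close> or starting with \<open>z\<close> is
  nested into a neighbouring argument. Hence cumulants with a constant argument vanish, and so
  do mixed cumulants of free elements: adjacent letters from the same algebra are merged by
  the product formula, and an alternating word is centered letter by letter, after which
  freeness kills every moment of its infixes, so that the cumulant equals the moment, which
  is zero.

  For \<open>\<tau> \<in> Y\<^sub>2\<^sub>n\<close>, \<open>\<kappa>\<^sub>\<tau>\<close> is a cumulant of the arguments \<open>\<kappa>\<^sub>\<tau>\<^sub>i(\<dots>) a\<^sub>j\<^sub>i\<close> along its right spine.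
  A right-child edge joining vertices of different parity either lies on the spine, making
  these arguments mixed, or lies in some \<open>\<tau>\<^sub>i\<close>, making an argument zero by induction.\<close>

section \<open>Sums over the splittings of a list\<close>

definition split_sum :: "('a list \<Rightarrow> 'a list \<Rightarrow> 'b::comm_monoid_add) \<Rightarrow> 'a list \<Rightarrow> 'b" where
  "split_sum f xs = (\<Sum>k\<le>length xs. f (take k xs) (drop k xs))"

definition pivot_sum :: "('a list \<Rightarrow> 'a \<Rightarrow> 'a list \<Rightarrow> 'b::comm_monoid_add) \<Rightarrow> 'a list \<Rightarrow> 'b" where
  "pivot_sum f xs = (\<Sum>k<length xs. f (take k xs) (xs ! k) (drop (Suc k) xs))"

lemma split_sum_Nil [simp]: "split_sum f [] = f [] []"
  by (simp add: split_sum_def)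

lemma split_sum_Cons: "split_sum f (x # xs) = f [] (x # xs) + split_sum (\<lambda>a b. f (x # a) b) xs"
  unfolding split_sum_def by (simp add: sum.atMost_Suc_shift del: sum.atMost_Suc)

lemma split_sum_snoc: "split_sum f (xs @ [x]) = split_sum (\<lambda>a b. f a (b @ [x])) xs + f (xs @ [x]) []"
  unfolding split_sum_def by simp

lemma split_sum_add: "split_sum (\<lambda>a b. f a b + g a b) xs = split_sum f xs + split_sum g xs"
  by (simp add: split_sum_def sum.distrib)

lemma split_sum_diff:
  "split_sum (\<lambda>a b. (f a b :: 'c::ab_group_add) - g a b) xs = split_sum f xs - split_sum g xs"
  by (simp add: split_sum_def sum_subtractf)

lemma split_sum_0 [simp]: "split_sum (\<lambda>a b. 0) xs = 0"
  by (simp add: split_sum_def)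

lemma split_sum_cong: "(\<And>a b. xs = a @ b \<Longrightarrow> f a b = g a b) \<Longrightarrow> split_sum f xs = split_sum g xs"
  unfolding split_sum_def by (rule sum.cong) auto

lemma split_sum_eq_0: "(\<And>a b. xs = a @ b \<Longrightarrow> f a b = 0) \<Longrightarrow> split_sum f xs = 0"
  unfolding split_sum_def by (intro sum.neutral ballI) simp

lemma split_sum_map: "split_sum f (map g xs) = split_sum (\<lambda>a b. f (map g a) (map g b)) xs"
  by (simp add: split_sum_def take_map drop_map)

lemma split_sum_assoc:
  "split_sum (\<lambda>A B. split_sum (\<lambda>A1 A2. f A1 A2 B) A) xs
   = split_sum (\<lambda>A1 R. split_sum (\<lambda>A2 B. f A1 A2 B) R) xs"
proof (induction xs arbitrary: f)
  case Nil
  then show ?case by simp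
next
  case (Cons x xs)
  then show ?case
    using Cons.IH[of "\<lambda>A1 A2 B. f (x # A1) A2 B"] by (simp add: split_sum_Cons split_sum_add add.assoc)
qed

lemma additive_split_sum:
  fixes h :: "'c::comm_monoid_add \<Rightarrow> 'd::ab_group_add"
  assumes "\<And>x y. h (x + y) = h x + h y"
  shows "h (split_sum f xs) = split_sum (\<lambda>a b. h (f a b)) xs"
proof -
  have "h 0 = 0" using assms[of 0 0] by simp
  from sum_comp_morphism[OF this assms, of "\<lambda>k. f (take k xs) (drop k xs)" "{..length xs}"]
  show ?thesis unfolding split_sum_def by (simp add: comp_def)
qed

lemma split_sum_only_last:
  assumes "\<And>a b. xs = a @ b \<Longrightarrow> b \<noteq> [] \<Longrightarrow> f a b = 0"
  shows "split_sum f xs = f xs []"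
proof -
  have "split_sum f xs = (\<Sum>k\<in>{length xs}. f (take k xs) (drop k xs))"
    unfolding split_sum_def using assms by (intro sum.mono_neutral_right) auto
  then show ?thesis by simp
qed

lemma split_sum_only_ends:
  assumes "xs \<noteq> []" and "\<And>a b. xs = a @ b \<Longrightarrow> a \<noteq> [] \<Longrightarrow> b \<noteq> [] \<Longrightarrow> f a b = 0"
  shows "split_sum f xs = f [] xs + f xs []"
proof -
  have "split_sum f xs = (\<Sum>k\<in>{0, length xs}. f (take k xs) (drop k xs))"
    unfolding split_sum_def
  proof (intro sum.mono_neutral_right ballI)
    fix i assume "i \<in> {..length xs} - {0, length xs}"
    then show "f (take i xs) (drop i xs) = 0" by (intro assms(2)) auto
  qed auto
  then show ?thesis using assms(1) by simp
qed

lemma pivot_sum_Nil [simp]: "pivot_sum f [] = 0"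
  by (simp add: pivot_sum_def)

lemma pivot_sum_Cons: "pivot_sum f (x # xs) = f [] x xs + pivot_sum (\<lambda>a q r. f (x # a) q r) xs"
  unfolding pivot_sum_def by (simp add: sum.lessThan_Suc_shift del: sum.lessThan_Suc)

lemma pivot_sum_conv_split_sum:
  "pivot_sum f xs = split_sum (\<lambda>A B. case B of [] \<Rightarrow> 0 | q # R \<Rightarrow> f A q R) xs"
proof -
  have "split_sum (\<lambda>A B. case B of [] \<Rightarrow> 0 | q # R \<Rightarrow> f A q R) xs
      = (\<Sum>k<length xs. case drop k xs of [] \<Rightarrow> 0 | q # R \<Rightarrow> f (take k xs) q R)"
    by (simp add: split_sum_def lessThan_Suc_atMost[symmetric])
  also have "\<dots> = pivot_sum f xs"
    unfolding pivot_sum_def by (rule sum.cong[OF refl]) (simp add: Cons_nth_drop_Suc[symmetric])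
  finally show ?thesis ..
qed

lemma pivot_sum_eq_0:
  assumes "\<And>A c B. xs = A @ c # B \<Longrightarrow> f A c B = 0"
  shows "pivot_sum f xs = 0"
  unfolding pivot_sum_def using assms by (intro sum.neutral ballI) (simp add: id_take_nth_drop)

lemma pivot_sum_map: "pivot_sum f (map g xs) = pivot_sum (\<lambda>a c r. f (map g a) (g c) (map g r)) xs"
  by (simp add: pivot_sum_def take_map drop_map)

lemma mult_pivot_sum: "(c::'c::semiring_0) * pivot_sum f xs = pivot_sum (\<lambda>A q R. c * f A q R) xs"
  by (simp add: pivot_sum_def sum_distrib_left)

lemma split_sum_pivot_sum_assoc:
  "split_sum (\<lambda>X1 X2. pivot_sum (f X1) X2) Q = pivot_sum (\<lambda>A q R. split_sum (\<lambda>A1 A2. f A1 A2 q R) A) Q"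
  unfolding pivot_sum_conv_split_sum split_sum_assoc[symmetric]
  by (rule split_sum_cong) (auto split: list.split)

section \<open>Planar binary trees\<close>

lemma Y_0: "Y 0 = {Leaf}"
  unfolding Y_def by (auto elim: tsize.elims)

lemma Y_Suc: "Y (Suc m) = (\<Union>p\<le>m. (\<lambda>(l, r). Node l r) ` (Y p \<times> Y (m - p)))"
  unfolding Y_def
proof (rule set_eqI, rule iffI)
  fix t assume "t \<in> {t. tsize t = Suc m}"
  then obtain l r where "t = Node l r" "tsize l + tsize r = m" by (cases t) auto
  then show "t \<in> (\<Union>p\<le>m. (\<lambda>(l, r). Node l r) ` ({t. tsize t = p} \<times> {t. tsize t = m - p}))"
    by (intro UN_I[of "tsize l"]) auto
qed auto

lemma finite_Y: "finite (Y m)"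
proof (induction m rule: less_induct)
  case (less m)
  show ?case
  proof (cases m)
    case 0 then show ?thesis by (simp add: Y_0)
  next
    case (Suc m')
    have "\<And>p. p \<le> m' \<Longrightarrow> finite (Y p) \<and> finite (Y (m' - p))" using less Suc by auto
    then show ?thesis unfolding Suc Y_Suc by auto
  qed
qed

lemma sum_Y_Suc:
  "(\<Sum>t\<in>Y (Suc m). f t) = (\<Sum>p\<le>m. \<Sum>l\<in>Y p. \<Sum>r\<in>Y (m - p). f (Node l r))"
proof -
  have "(\<Sum>t\<in>Y (Suc m). f t) = (\<Sum>p\<le>m. \<Sum>t\<in>(\<lambda>(l, r). Node l r) ` (Y p \<times> Y (m - p)). f t)"
    unfolding Y_Suc by (rule sum.UNION_disjoint) (use finite_Y in \<open>auto simp: Y_def\<close>)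
  also have "\<dots> = (\<Sum>p\<le>m. \<Sum>(l,r)\<in>Y p \<times> Y (m - p). f (Node l r))"
    by (rule sum.cong[OF refl], subst sum.reindex) (auto simp: inj_on_def split_def)
  also have "\<dots> = (\<Sum>p\<le>m. \<Sum>l\<in>Y p. \<Sum>r\<in>Y (m - p). f (Node l r))"
    by (rule sum.cong[OF refl], rule sum.cartesian_product[symmetric])
  finally show ?thesis .
qed



section \<open>Cumulants of a \<open>B\<close>-valued probability space\<close>

locale B_cumulants =
  fixes smB :: "'k::field_char_0 \<Rightarrow> 'b::ring_1 \<Rightarrow> 'b"
    and smA :: "'k \<Rightarrow> 'a::ring_1 \<Rightarrow> 'a"
    and lact :: "'b \<Rightarrow> 'a \<Rightarrow> 'a" and ract :: "'a \<Rightarrow> 'b \<Rightarrow> 'a"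
    and E :: "'a \<Rightarrow> 'b" and \<kappa> :: "'a list \<Rightarrow> 'b"
  assumes bps: "B_prob_space smB smA lact ract E"
    and cumu: "is_cumulants lact E \<kappa>"
begin

lemma lact_add_right: "lact x (u + v) = lact x u + lact x v"
  and lact_add_left: "lact (x + y) u = lact x u + lact y u"
  and lact_one [simp]: "lact 1 u = u"
  and ract_one [simp]: "ract u 1 = u"
  and lact_mult: "lact (x * y) u = lact x (lact y u)"
  and lact_times: "lact x (u * v) = lact x u * v"
  and ract_times_eq_times_lact: "ract u x * v = u * lact x v"
  and E_add: "E (u + v) = E u + E v"
  and E_one [simp]: "E 1 = 1"
  using bps unfolding B_prob_space_def by simp_all

lemma E_lact_ract: "E (lact x (ract u y)) = x * E u * y"
  using bps unfolding B_prob_space_def by meson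

lemma lact_0_left [simp]: "lact 0 u = 0"
  using lact_add_left[of 0 0 u] by simp

lemma lact_0_right [simp]: "lact x 0 = 0"
  using lact_add_right[of x 0 0] by simp

lemma lact_minus_left: "lact (- x) u = - lact x u"
  using lact_add_left[of x "- x" u] by (simp add: add.commute eq_neg_iff_add_eq_0)

lemma lact_one_times: "lact x 1 * u = lact x u"
  using lact_times[of x 1 u] by simp

lemma times_lact_one: "u * lact x 1 = ract u x"
  using ract_times_eq_times_lact[of u x 1] by simp

lemma E_0 [simp]: "E 0 = 0"
  using E_add[of 0 0] by simp

lemma E_diff: "E (u - v) = E u - E v"
  using E_add[of "u - v" v] by (simp add: eq_diff_eq)

lemma E_lact: "E (lact x u) = x * E u"
  using E_lact_ract[of x u 1] by simp

lemma E_ract: "E (ract u x) = E u * x"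
  using E_lact_ract[of 1 u x] by simp

definition mom :: "'a list \<Rightarrow> 'b" where
  "mom w = E (prod_list w)"

definition weighted :: "'a list \<Rightarrow> 'a \<Rightarrow> 'a" where
  "weighted g x = lact (mom g) x"

lemma mom_Nil [simp]: "mom [] = 1"
  by (simp add: mom_def)

lemma weighted_Nil [simp]: "weighted [] x = x"
  by (simp add: weighted_def)

lemma mom_add: "mom (ga @ (u + v) # gb) = mom (ga @ u # gb) + mom (ga @ v # gb)"
  by (simp add: mom_def algebra_simps E_add)

text \<open>\<open>blocks C P g xs\<close> reads the letters \<open>xs\<close> from left to right; each letter \<open>x\<close>
  either closes a block, appending the argument \<open>weighted g x\<close> to \<open>P\<close> and emptying the
  gap \<open>g\<close>, or is appended to the gap. \<open>C\<close> is applied to every final configuration, and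
  \<open>no_gap F\<close> discards those in which the last block is left open. Thus
  \<open>blocks (no_gap F) [] [] w\<close> is the sum of
  \<open>F [E(w\<^sub>1 \<cdots> w\<^sub>j\<^sub>1\<^sub>-\<^sub>1) w\<^sub>j\<^sub>1, \<dots>, E(w\<^sub>j\<^sub>k\<^sub>-\<^sub>1\<^sub>+\<^sub>1 \<cdots> w\<^sub>j\<^sub>k\<^sub>-\<^sub>1) w\<^sub>j\<^sub>k]\<close>
  over all \<open>j\<^sub>1 < \<dots> < j\<^sub>k = length w\<close>.\<close>

primrec blocks :: "('a list \<Rightarrow> 'a list \<Rightarrow> 'b) \<Rightarrow> 'a list \<Rightarrow> 'a list \<Rightarrow> 'a list \<Rightarrow> 'b" where
  "blocks C P g [] = C P g"
| "blocks C P g (x # xs) = blocks C (P @ [weighted g x]) [] xs + blocks C P (g @ [x]) xs"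

definition no_gap :: "('a list \<Rightarrow> 'b) \<Rightarrow> 'a list \<Rightarrow> 'a list \<Rightarrow> 'b" where
  "no_gap F P g = (if g = [] then F P else 0)"

lemma no_gap_Nil [simp]: "no_gap F P [] = F P"
  and no_gap_Cons [simp]: "g \<noteq> [] \<Longrightarrow> no_gap F P g = 0"
  by (auto simp: no_gap_def)

lemma blocks_append: "blocks C P g (xs @ ys) = blocks (\<lambda>P' g'. blocks C P' g' ys) P g xs"
  by (induction xs arbitrary: P g) auto

lemma blocks_snoc:
  "blocks C P g (xs @ [x]) = blocks (\<lambda>P' g'. C (P' @ [weighted g' x]) [] + C P' (g' @ [x])) P g xs"
  by (simp add: blocks_append)

lemma blocks_no_gap_shift: "blocks (no_gap F) P g xs = blocks (no_gap (\<lambda>L. F (P @ L))) [] g xs"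
proof (induction xs arbitrary: F P g)
  case Nil
  then show ?case by (simp add: no_gap_def)
next
  case (Cons x xs)
  then show ?case
    using Cons[of F "P @ [weighted g x]" "[]"] Cons[of F P "g @ [x]"]
      Cons[of "\<lambda>L. F (P @ L)" "[weighted g x]" "[]"]
    by simp
qed

lemma blocks_no_gap_single: "blocks (no_gap F) [y] g xs = blocks (no_gap (\<lambda>L. F (y # L))) [] g xs"
  using blocks_no_gap_shift[of F "[y]"] by simp

lemma blocks_add: "blocks (\<lambda>P g. C1 P g + C2 P g) P g xs = blocks C1 P g xs + blocks C2 P g xs"
  by (induction xs arbitrary: P g) (auto simp: algebra_simps)

lemma blocks_0: "blocks (\<lambda>P g. 0) P g xs = 0"
  by (induction xs arbitrary: P g) auto

lemma additive_blocks:
  assumes "\<And>x y. h (x + y) = h x + h y"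
  shows "h (blocks C P g xs) = blocks (\<lambda>P g. h (C P g)) P g xs"
  by (induction xs arbitrary: P g) (auto simp: assms)

lemma additive_blocks_no_gap:
  assumes "\<And>x y. h (x + y) = h x + h y"
  shows "h (blocks (no_gap F) P g xs) = blocks (no_gap (\<lambda>L. h (F L))) P g xs"
proof -
  have "h 0 = 0" using assms[of 0 0] by simp
  then have "(\<lambda>P g. h (no_gap F P g)) = no_gap (\<lambda>L. h (F L))"
    by (auto simp: no_gap_def fun_eq_iff)
  then show ?thesis using additive_blocks[of h, OF assms] by metis
qed

lemma blocks_no_gap_add:
  "blocks (no_gap (\<lambda>L. F1 L + F2 L)) P g xs = blocks (no_gap F1) P g xs + blocks (no_gap F2) P g xs"
  by (induction xs arbitrary: P g) (auto simp: no_gap_def)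

lemma blocks_no_gap_diff:
  "blocks (no_gap (\<lambda>L. F1 L - F2 L)) P g xs = blocks (no_gap F1) P g xs - blocks (no_gap F2) P g xs"
  by (induction xs arbitrary: P g) (auto simp: no_gap_def)

lemma blocks_no_gap_mult:
  "blocks (no_gap (\<lambda>L. c * F L)) P g xs = c * blocks (no_gap F) P g xs"
  by (induction xs arbitrary: P g) (auto simp: no_gap_def algebra_simps)

lemma blocks_no_gap_sum:
  "blocks (no_gap (\<lambda>L. \<Sum>i\<in>S. F i L)) P g xs = (\<Sum>i\<in>S. blocks (no_gap (F i)) P g xs)"
  by (induction xs arbitrary: P g) (auto simp: no_gap_def sum.distrib)

lemma blocks_no_gap_split_sum:
  "blocks (no_gap (\<lambda>L. split_sum (f L) b)) P g xs = split_sum (\<lambda>Y h. blocks (no_gap (\<lambda>L. f L Y h)) P g xs) b"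
  unfolding split_sum_def by (rule blocks_no_gap_sum)

lemma blocks_no_gap_pivot_sum:
  "blocks (no_gap (\<lambda>L. pivot_sum (f L) b)) P g xs = pivot_sum (\<lambda>A q R. blocks (no_gap (\<lambda>L. f L A q R)) P g xs) b"
  unfolding pivot_sum_def by (rule blocks_no_gap_sum)

lemma blocks_cong:
  assumes "\<And>L h. length L \<le> length P + length xs \<Longrightarrow> C L h = C' L h"
  shows "blocks C P g xs = blocks C' P g xs"
  using assms
proof (induction xs arbitrary: P g)
  case Nil
  then show ?case by simp
next
  case (Cons x xs)
  have "blocks C (P @ [weighted g x]) [] xs = blocks C' (P @ [weighted g x]) [] xs"
    by (rule Cons.IH) (use Cons.prems in auto)
  moreover have "blocks C P (g @ [x]) xs = blocks C' P (g @ [x]) xs"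
    by (rule Cons.IH) (use Cons.prems in auto)
  ultimately show ?case by simp
qed

lemma blocks_cong_nonempty:
  assumes "P \<noteq> [] \<or> g \<noteq> []"
    and "\<And>L h. length L \<le> length P + length xs \<Longrightarrow> L \<noteq> [] \<or> h \<noteq> [] \<Longrightarrow> C L h = C' L h"
  shows "blocks C P g xs = blocks C' P g xs"
  using assms
proof (induction xs arbitrary: P g)
  case Nil
  then show ?case by simp
next
  case (Cons x xs)
  have "blocks C (P @ [weighted g x]) [] xs = blocks C' (P @ [weighted g x]) [] xs"
    by (rule Cons.IH) (use Cons.prems in auto)
  moreover have "blocks C P (g @ [x]) xs = blocks C' P (g @ [x]) xs"
    by (rule Cons.IH) (use Cons.prems in auto)
  ultimately show ?case by simp
qed

lemma blocks_eq_0_nonempty: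
  assumes "P \<noteq> [] \<or> g \<noteq> []"
    and "\<And>L h. length L \<le> length P + length xs \<Longrightarrow> L \<noteq> [] \<or> h \<noteq> [] \<Longrightarrow> C L h = 0"
  shows "blocks C P g xs = 0"
  using blocks_cong_nonempty[where C' = "\<lambda>L h. 0", OF assms] by (simp add: blocks_0)

lemma blocks_eq_finest:
  assumes "xs \<noteq> []"
    and "\<And>L h. length L < length P + length xs \<Longrightarrow> L \<noteq> [] \<or> h \<noteq> [] \<Longrightarrow> C L h = 0"
  shows "blocks C P [] xs = C (P @ xs) []"
  using assms
proof (induction xs arbitrary: P)
  case Nil
  then show ?case by simp
next
  case (Cons x xs)
  have "blocks C P [x] xs = 0"
    by (rule blocks_eq_0_nonempty) (use Cons.prems in auto)
  moreover have "blocks C (P @ [x]) [] xs = C (P @ x # xs) []"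
    using Cons.IH[of "P @ [x]"] Cons.prems by (cases "xs = []") auto
  ultimately show ?case by simp
qed

lemma blocks_no_gap_eq_finest:
  assumes "\<And>L. L \<noteq> [] \<Longrightarrow> length L < length xs \<Longrightarrow> F L = 0"
  shows "blocks (no_gap F) [] [] xs = F xs"
proof (cases "xs = []")
  case False
  have "blocks (no_gap F) [] [] xs = no_gap F ([] @ xs) []"
    by (rule blocks_eq_finest[OF False]) (use assms in \<open>auto simp: no_gap_def\<close>)
  then show ?thesis by simp
qed simp

lemma blocks_no_gap_eq_0:
  assumes "xs \<noteq> []" and "\<And>L. L \<noteq> [] \<Longrightarrow> length L \<le> length xs \<Longrightarrow> F L = 0"
  shows "blocks (no_gap F) [] [] xs = 0"
proof -
  obtain x xs' where xs: "xs = x # xs'" using assms(1) by (cases xs) auto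
  have "blocks (no_gap F) [x] [] xs' = 0"
    by (rule blocks_eq_0_nonempty) (use assms xs in \<open>auto simp: no_gap_def\<close>)
  moreover have "blocks (no_gap F) [] [x] xs' = 0"
    by (rule blocks_eq_0_nonempty) (use assms xs in \<open>auto simp: no_gap_def\<close>)
  ultimately show ?thesis using xs by simp
qed

lemma blocks_first:
  "blocks C P g xs = pivot_sum (\<lambda>A q R. blocks C (P @ [weighted (g @ A) q]) [] R) xs + C P (g @ xs)"
  by (induction xs arbitrary: g) (simp_all add: pivot_sum_Cons)

lemma blocks_no_gap_first:
  assumes "xs \<noteq> [] \<or> F [] = 0"
  shows "blocks (no_gap F) [] g xs = pivot_sum (\<lambda>A q R. blocks (no_gap (\<lambda>L. F (weighted (g @ A) q # L))) [] [] R) xs"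
  using blocks_first[of "no_gap F" "[]" g xs] assms by (auto simp: blocks_no_gap_single no_gap_def)

lemma blocks_eq_split_sum:
  "blocks C [] [] xs = split_sum (\<lambda>A g. blocks (no_gap (\<lambda>P. C P g)) [] [] A) xs"
proof (induction xs arbitrary: C rule: rev_induct)
  case Nil
  then show ?case by simp
next
  case (snoc y xs)
  have "blocks C [] [] (xs @ [y]) = blocks (\<lambda>P g. C (P @ [weighted g y]) [] + C P (g @ [y])) [] [] xs"
    by (rule blocks_snoc)
  also have "\<dots> = split_sum (\<lambda>A g. blocks (no_gap (\<lambda>P. C (P @ [weighted g y]) [])) [] [] A) xs
                + split_sum (\<lambda>A g. blocks (no_gap (\<lambda>P. C P (g @ [y]))) [] [] A) xs"
    unfolding snoc.IH[of "\<lambda>P g. C (P @ [weighted g y]) [] + C P (g @ [y])"]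
    by (simp add: blocks_no_gap_add split_sum_add)
  also have "split_sum (\<lambda>A g. blocks (no_gap (\<lambda>P. C (P @ [weighted g y]) [])) [] [] A) xs
           = blocks (no_gap (\<lambda>P. C P [])) [] [] (xs @ [y])"
    using snoc.IH[of "\<lambda>P g. C (P @ [weighted g y]) []"] by (simp add: blocks_snoc)
  finally show ?case by (simp add: split_sum_snoc add.commute)
qed

lemma blocks_no_gap_snoc:
  "blocks (no_gap F) [] [] (xs @ [x]) = split_sum (\<lambda>A g. blocks (no_gap (\<lambda>P. F (P @ [weighted g x]))) [] [] A) xs"
proof -
  have "blocks (no_gap F) [] [] (xs @ [x]) = blocks (\<lambda>P g. F (P @ [weighted g x])) [] [] xs"
    by (simp add: blocks_snoc)
  then show ?thesis
    unfolding blocks_eq_split_sum[of "\<lambda>P g. F (P @ [weighted g x])"] .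
qed

lemma blocks_no_gap_split_sum_args:
  "blocks (no_gap (split_sum G)) [] [] xs
   = split_sum (\<lambda>X1 X2. blocks (no_gap (\<lambda>P1. blocks (no_gap (G P1)) [] [] X2)) [] [] X1) xs"
proof (induction "length xs" arbitrary: xs G rule: less_induct)
  case less
  show ?case
  proof (cases xs rule: rev_cases)
    case Nil
    then show ?thesis by simp
  next
    case (snoc xs' x)
    have "blocks (no_gap (split_sum G)) [] [] xs
        = split_sum (\<lambda>A g. blocks (no_gap (split_sum (\<lambda>a b. G a (b @ [weighted g x])))) [] [] A) xs'
          + split_sum (\<lambda>A g. blocks (no_gap (\<lambda>P. G (P @ [weighted g x]) [])) [] [] A) xs'"
      unfolding snoc by (simp add: blocks_no_gap_snoc split_sum_snoc blocks_no_gap_add split_sum_add)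
    also have "split_sum (\<lambda>A g. blocks (no_gap (\<lambda>P. G (P @ [weighted g x]) [])) [] [] A) xs'
             = blocks (no_gap (\<lambda>P. G P [])) [] [] xs"
      unfolding snoc by (simp add: blocks_no_gap_snoc)
    also have "split_sum (\<lambda>A g. blocks (no_gap (split_sum (\<lambda>a b. G a (b @ [weighted g x])))) [] [] A) xs'
        = split_sum (\<lambda>A g. split_sum (\<lambda>X1 X2. blocks (no_gap (\<lambda>P1.
            blocks (no_gap (\<lambda>P2. G P1 (P2 @ [weighted g x]))) [] [] X2)) [] [] X1) A) xs'"
      by (rule split_sum_cong) (use less.hyps snoc in simp)
    also have "\<dots> = split_sum (\<lambda>X1 X2. blocks (no_gap (\<lambda>P1. blocks (no_gap (G P1)) [] [] (X2 @ [x]))) [] [] X1) xs'"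
      by (simp add: split_sum_assoc blocks_no_gap_snoc blocks_no_gap_split_sum)
    finally show ?thesis unfolding snoc by (simp add: split_sum_snoc)
  qed
qed

lemma weighted_add_gap: "weighted (ga @ (u + v) # gb) x = weighted (ga @ u # gb) x + weighted (ga @ v # gb) x"
  by (simp add: weighted_def mom_add lact_add_left)

lemma weighted_add: "weighted g (u + v) = weighted g u + weighted g v"
  by (simp add: weighted_def lact_add_right)

context
  fixes F :: "'a list \<Rightarrow> 'b"
  assumes F_add: "\<And>A B u v. F (A @ (u + v) # B) = F (A @ u # B) + F (A @ v # B)"
begin

lemma blocks_no_gap_add_arg:
  "blocks (no_gap F) (Pa @ (u + v) # Pb) g xs
   = blocks (no_gap F) (Pa @ u # Pb) g xs + blocks (no_gap F) (Pa @ v # Pb) g xs"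
proof (induction xs arbitrary: Pb g)
  case Nil
  then show ?case by (simp add: no_gap_def F_add)
next
  case (Cons x xs)
  then show ?case using Cons[of "Pb @ [weighted g x]" "[]"] Cons[of Pb "g @ [x]"] by simp
qed

lemma blocks_no_gap_add_gap:
  "blocks (no_gap F) P (ga @ (u + v) # gb) xs
   = blocks (no_gap F) P (ga @ u # gb) xs + blocks (no_gap F) P (ga @ v # gb) xs"
proof (induction xs arbitrary: gb)
  case Nil
  then show ?case by simp
next
  case (Cons x xs)
  then show ?case
    using Cons[of "gb @ [x]"] blocks_no_gap_add_arg[where Pa = P and Pb = "[]"]
    by (simp add: weighted_add_gap)
qed

lemma blocks_no_gap_add_letter:
  "blocks (no_gap F) P g (xa @ (u + v) # xb)
   = blocks (no_gap F) P g (xa @ u # xb) + blocks (no_gap F) P g (xa @ v # xb)"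
proof (induction xa arbitrary: P g)
  case Nil
  then show ?case
    using blocks_no_gap_add_arg[where Pa = P and Pb = "[]"] blocks_no_gap_add_gap[where ga = g and gb = "[]"]
    by (simp add: weighted_add)
next
  case (Cons y xa)
  then show ?case using Cons[of "P @ [weighted g y]" "[]"] Cons[of P "g @ [y]"] by simp
qed

end

lemma sum_kappa_tree_eq_mom: "(\<Sum>t\<in>Y (length w). kappa_tree lact \<kappa> t w) = mom w"
  using cumu unfolding is_cumulants_def mom_def by simp

lemma kappa_tree_Node: "kappa_tree lact \<kappa> (Node l r) as = \<kappa> (spine_args lact \<kappa> (Node l r) as)"
  by (simp add: kappa_tree_def)

lemma spine_args_Node:
  "spine_args lact \<kappa> (Node l r) as
   = lact (kappa_tree lact \<kappa> l (take (tsize l) as)) (as ! tsize l) # spine_args lact \<kappa> r (drop (Suc (tsize l)) as)"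
  by (simp add: kappa_tree_def)

lemma sum_Y_Suc_spine_args:
  "(\<Sum>t\<in>Y (Suc m). F (spine_args lact \<kappa> t as))
   = (\<Sum>p\<le>m. \<Sum>l\<in>Y p. \<Sum>r\<in>Y (m - p).
        F (lact (kappa_tree lact \<kappa> l (take p as)) (as ! p) # spine_args lact \<kappa> r (drop (Suc p) as)))"
  unfolding sum_Y_Suc by (intro sum.cong refl) (simp add: Y_def spine_args_Node del: spine_args.simps)

definition additive_at :: "nat \<Rightarrow> bool" where
  "additive_at n \<longleftrightarrow> (\<forall>P Q u v. length P + length Q + 1 = n \<longrightarrow>
      \<kappa> (P @ (u + v) # Q) = \<kappa> (P @ u # Q) + \<kappa> (P @ v # Q))"

lemma additive_at_imp_kappa_0:
  assumes "additive_at (length P + length Q + 1)"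
  shows "\<kappa> (P @ 0 # Q) = 0"
  using assms unfolding additive_at_def by (metis add.right_neutral add_cancel_right_right)

lemma additive_at_imp_kappa_lact_sum:
  assumes "additive_at (length A + length B + 1)" and "finite S"
  shows "(\<Sum>i\<in>S. \<kappa> (A @ lact (f i) x # B)) = \<kappa> (A @ lact (\<Sum>i\<in>S. f i) x # B)"
  using assms(2)
proof (induction S rule: finite_induct)
  case empty
  then show ?case using additive_at_imp_kappa_0[OF assms(1)] by simp
next
  case (insert i S)
  then show ?case using assms(1) unfolding additive_at_def by (simp add: lact_add_left)
qed

lemma sum_kappa_lact_first_eq_weighted:
  assumes "length w = p" and "w \<noteq> [] \<Longrightarrow> additive_at (length pre + length L + 1)"
  shows "(\<Sum>l\<in>Y p. \<kappa> (pre @ lact (kappa_tree lact \<kappa> l w) x # L)) = \<kappa> (pre @ weighted w x # L)"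
proof (cases "w = []")
  case False
  then have "(\<Sum>l\<in>Y p. \<kappa> (pre @ lact (kappa_tree lact \<kappa> l w) x # L))
      = \<kappa> (pre @ lact (\<Sum>l\<in>Y (length w). kappa_tree lact \<kappa> l w) x # L)"
    using additive_at_imp_kappa_lact_sum[of pre L "Y p" "\<lambda>l. kappa_tree lact \<kappa> l w" x] finite_Y assms
    by simp
  then show ?thesis by (simp add: sum_kappa_tree_eq_mom weighted_def)
qed (use assms(1) in \<open>simp add: Y_0 kappa_tree_def\<close>)

lemma sum_kappa_spine_args_eq_blocks:
  assumes "length as = m" and "\<forall>k < length pre + m. additive_at k"
  shows "(\<Sum>t\<in>Y m. \<kappa> (pre @ spine_args lact \<kappa> t as)) = blocks (no_gap (\<lambda>L. \<kappa> (pre @ L))) [] [] as"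
  using assms
proof (induction m arbitrary: pre as rule: less_induct)
  case (less m)
  show ?case
  proof (cases m)
    case 0
    then show ?thesis using less.prems by (simp add: Y_0)
  next
    case (Suc m')
    then have ne: "as \<noteq> []" using less.prems(1) by auto
    let ?arg = "\<lambda>l p. lact (kappa_tree lact \<kappa> l (take p as)) (as ! p)"
    have "(\<Sum>t\<in>Y m. \<kappa> (pre @ spine_args lact \<kappa> t as))
        = (\<Sum>p\<le>m'. \<Sum>l\<in>Y p. \<Sum>r\<in>Y (m' - p). \<kappa> ((pre @ [?arg l p]) @ spine_args lact \<kappa> r (drop (Suc p) as)))"
      using sum_Y_Suc_spine_args[where F = "\<lambda>L. \<kappa> (pre @ L)" and m = m' and as = as] Suc by simp
    also have "\<dots> = (\<Sum>p\<le>m'. \<Sum>l\<in>Y p. blocks (no_gap (\<lambda>L. \<kappa> ((pre @ [?arg l p]) @ L))) [] [] (drop (Suc p) as))"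
      by (intro sum.cong refl less.IH) (use less.prems Suc in auto)
    also have "\<dots> = (\<Sum>p\<le>m'. blocks (no_gap (\<lambda>L. \<Sum>l\<in>Y p. \<kappa> (pre @ ?arg l p # L))) [] [] (drop (Suc p) as))"
      by (simp add: blocks_no_gap_sum)
    also have "\<dots> = (\<Sum>p<length as. blocks (no_gap (\<lambda>L. \<kappa> (pre @ weighted (take p as) (as ! p) # L))) [] [] (drop (Suc p) as))"
      unfolding less.prems(1) Suc lessThan_Suc_atMost
    proof (intro sum.cong refl blocks_cong)
      fix p and L :: "'a list" assume "p \<in> {..m'}" and "length L \<le> length [] + length (drop (Suc p) as)"
      then have "(\<Sum>l\<in>Y p. \<kappa> (pre @ ?arg l p # L)) = \<kappa> (pre @ weighted (take p as) (as ! p) # L)"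
        using less.prems Suc by (intro sum_kappa_lact_first_eq_weighted) auto
      then show "no_gap (\<lambda>L. \<Sum>l\<in>Y p. \<kappa> (pre @ ?arg l p # L)) L h
          = no_gap (\<lambda>L. \<kappa> (pre @ weighted (take p as) (as ! p) # L)) L h" for h
        by (simp add: no_gap_def)
    qed
    also have "\<dots> = blocks (no_gap (\<lambda>L. \<kappa> (pre @ L))) [] [] as"
      using blocks_no_gap_first[of as "\<lambda>L. \<kappa> (pre @ L)" "[]"] ne less.prems(1) Suc
      by (auto simp: pivot_sum_def)
    finally show ?thesis .
  qed
qed

lemma mom_eq_blocks_if_additive:
  assumes "\<forall>k < length w. additive_at k" and "w \<noteq> []"
  shows "mom w = blocks (no_gap \<kappa>) [] [] w"
proof -
  have "kappa_tree lact \<kappa> t w = \<kappa> ([] @ spine_args lact \<kappa> t w)" if "t \<in> Y (length w)" for t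
    using that assms(2) by (cases t) (auto simp: Y_def kappa_tree_def)
  then have "mom w = (\<Sum>t\<in>Y (length w). \<kappa> ([] @ spine_args lact \<kappa> t w))"
    using sum_kappa_tree_eq_mom[of w] by simp
  also have "\<dots> = blocks (no_gap \<kappa>) [] [] w"
    using sum_kappa_spine_args_eq_blocks[of w "length w" "[]"] assms(1) by simp
  finally show ?thesis .
qed

text \<open>On words of length \<open>n\<close>, the moment is \<open>\<kappa>\<close> plus block terms with fewer arguments,
  which are additive by induction; the moment itself is additive.\<close>

lemma additive_at_all: "additive_at n"
proof (induction n rule: less_induct)
  case (less n)
  define F where "F = (\<lambda>L. if length L < n then \<kappa> L else 0)"
  have F_add: "F (A @ (x + y) # B) = F (A @ x # B) + F (A @ y # B)" for A B x y
    using less unfolding F_def additive_at_def by auto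
  have mom_split: "mom w = blocks (no_gap F) [] [] w + \<kappa> w" if "length w = n" "w \<noteq> []" for w
  proof -
    have "mom w = blocks (no_gap \<kappa>) [] [] w"
      by (rule mom_eq_blocks_if_additive) (use less that in auto)
    moreover have "blocks (no_gap (\<lambda>L. \<kappa> L - F L)) [] [] w = \<kappa> w - F w"
      by (rule blocks_no_gap_eq_finest) (use that in \<open>simp add: F_def\<close>)
    ultimately show ?thesis
      using that by (simp add: blocks_no_gap_diff F_def algebra_simps)
  qed
  show ?case unfolding additive_at_def
  proof (intro allI impI)
    fix P Q :: "'a list" and u v :: 'a
    assume "length P + length Q + 1 = n"
    then show "\<kappa> (P @ (u + v) # Q) = \<kappa> (P @ u # Q) + \<kappa> (P @ v # Q)"
      using mom_add[of P u v Q] blocks_no_gap_add_letter[OF F_add, of "[]" "[]" P u v Q]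
        mom_split[of "P @ (u + v) # Q"] mom_split[of "P @ u # Q"] mom_split[of "P @ v # Q"]
      by (simp add: algebra_simps)
  qed
qed

lemma mom_eq_blocks: "w \<noteq> [] \<Longrightarrow> mom w = blocks (no_gap \<kappa>) [] [] w"
  using mom_eq_blocks_if_additive additive_at_all by blast

lemma kappa_add: "\<kappa> (P @ (u + v) # Q) = \<kappa> (P @ u # Q) + \<kappa> (P @ v # Q)"
  using additive_at_all unfolding additive_at_def by blast

lemma kappa_0: "\<kappa> (P @ 0 # Q) = 0"
  using additive_at_imp_kappa_0 additive_at_all by blast

lemma kappa_diff: "\<kappa> (P @ (u - v) # Q) = \<kappa> (P @ u # Q) - \<kappa> (P @ v # Q)"
  using kappa_add[of P "u - v" v Q] by (simp add: eq_diff_eq)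

lemma kappa_single: "\<kappa> [x] = E x"
  using mom_eq_blocks[of "[x]"] by (simp add: mom_def)

lemma mom_Cons_lact: "mom (lact c x # ys) = c * mom (x # ys)"
  by (simp add: mom_def lact_times[symmetric] E_lact)

lemma weighted_Cons_lact: "weighted (lact c x # h) y = lact c (weighted (x # h) y)"
  by (simp add: weighted_def mom_Cons_lact lact_mult)

lemma blocks_no_gap_lact_gap:
  "blocks (no_gap F) [] (lact c x # h) ys
   = blocks (no_gap (\<lambda>L. case L of [] \<Rightarrow> F [] | y # L' \<Rightarrow> F (lact c y # L'))) [] (x # h) ys"
proof (induction ys arbitrary: h)
  case Nil
  then show ?case by simp
next
  case (Cons y ys)
  then show ?case
    using Cons[of "h @ [y]"] by (simp add: weighted_Cons_lact blocks_no_gap_single)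
qed

lemma kappa_lact: "\<kappa> (lact c x # L) = c * \<kappa> (x # L)"
proof (induction "length L" arbitrary: L x rule: less_induct)
  case less
  show ?case
  proof (cases "L = []")
    case True
    then show ?thesis by (simp add: kappa_single E_lact)
  next
    case False
    define F where "F = (\<lambda>L. case L of [] \<Rightarrow> \<kappa> [] | y # L' \<Rightarrow> \<kappa> (lact c y # L'))"
    define D where "D = (\<lambda>L'. \<kappa> (lact c x # L') - c * \<kappa> (x # L'))"
    have "blocks (no_gap F) [] [x] L = blocks (no_gap (\<lambda>L'. c * \<kappa> L')) [] [x] L"
    proof (rule blocks_cong_nonempty)
      fix L' h :: "'a list"
      assume "length L' \<le> length [] + length L" and "L' \<noteq> [] \<or> h \<noteq> []"
      then show "no_gap F L' h = no_gap (\<lambda>L'. c * \<kappa> L') L' h"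
        using less.hyps by (cases L') (auto simp: F_def no_gap_def)
    qed simp
    then have "mom (lact c x # L) = blocks (no_gap (\<lambda>L'. \<kappa> (lact c x # L'))) [] [] L + c * blocks (no_gap \<kappa>) [] [x] L"
      using mom_eq_blocks[of "lact c x # L"] blocks_no_gap_lact_gap[of \<kappa> c x "[]" L]
      by (simp add: blocks_no_gap_single blocks_no_gap_mult F_def)
    moreover have "mom (x # L) = blocks (no_gap (\<lambda>L'. \<kappa> (x # L'))) [] [] L + blocks (no_gap \<kappa>) [] [x] L"
      using mom_eq_blocks[of "x # L"] by (simp add: blocks_no_gap_single)
    moreover have "blocks (no_gap D) [] [] L = D L"
      by (rule blocks_no_gap_eq_finest) (use less.hyps in \<open>simp add: D_def\<close>)
    ultimately show ?thesis
      using mom_Cons_lact[of c x L] by (simp add: D_def blocks_no_gap_mult blocks_no_gap_diff algebra_simps)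
  qed
qed

text \<open>The terms of \<open>mom (z # A)\<close> in which \<open>z\<close> is a block by itself.\<close>

definition head_sum :: "'a \<Rightarrow> 'a list \<Rightarrow> 'b" where
  "head_sum z A = blocks (no_gap (\<lambda>L. \<kappa> (z # L))) [] [] A"

lemma mom_eq_pivot_sum: "X \<noteq> [] \<Longrightarrow> mom X = pivot_sum (\<lambda>A q R. blocks (no_gap \<kappa>) [weighted A q] [] R) X"
  using mom_eq_blocks[of X] blocks_first[of "no_gap \<kappa>" "[]" "[]" X] by simp

lemma blocks_no_gap_kappa_add_last_arg:
  "blocks (no_gap \<kappa>) (X @ [c1 + c2]) [] R = blocks (no_gap \<kappa>) (X @ [c1]) [] R + blocks (no_gap \<kappa>) (X @ [c2]) [] R"
  using blocks_no_gap_add_arg[of \<kappa> X c1 c2 "[]" "[]" R] kappa_add by simp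

lemma blocks_no_gap_kappa_lact_arg: "blocks (no_gap \<kappa>) [lact k c] [] R = k * blocks (no_gap \<kappa>) [c] [] R"
  by (simp add: blocks_no_gap_single kappa_lact blocks_no_gap_mult)

lemma weighted_Cons_eq_split_sum:
  assumes "mom (z # A) = split_sum (\<lambda>A1 A2. head_sum z A1 * mom A2) A"
  shows "weighted (z # A) q = split_sum (\<lambda>A1 A2. lact (head_sum z A1) (weighted A2 q)) A"
proof -
  have "weighted (z # A) q = split_sum (\<lambda>A1 A2. lact (head_sum z A1 * mom A2) q) A"
    unfolding weighted_def assms by (rule additive_split_sum) (simp add: lact_add_left)
  then show ?thesis by (simp add: lact_mult weighted_def)
qed

text \<open>Factorisation of a moment along the block containing its first letter.\<close>

lemma mom_Cons_eq_split_sum: "mom (z # Ys) = split_sum (\<lambda>A1 A2. head_sum z A1 * mom A2) Ys"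
proof (induction "length Ys" arbitrary: Ys rule: less_induct)
  case less
  have inner: "blocks (no_gap \<kappa>) [weighted (z # A) q] [] R
      = split_sum (\<lambda>A1 A2. head_sum z A1 * blocks (no_gap \<kappa>) [weighted A2 q] [] R) A"
    if "Ys = A @ q # R" for A q R
  proof -
    have "weighted (z # A) q = split_sum (\<lambda>A1 A2. lact (head_sum z A1) (weighted A2 q)) A"
      by (rule weighted_Cons_eq_split_sum, rule less.hyps) (use that in simp)
    then have "blocks (no_gap \<kappa>) [weighted (z # A) q] [] R
        = split_sum (\<lambda>A1 A2. blocks (no_gap \<kappa>) [lact (head_sum z A1) (weighted A2 q)] [] R) A"
      using additive_split_sum[of "\<lambda>c. blocks (no_gap \<kappa>) [c] [] R"]
        blocks_no_gap_kappa_add_last_arg[of "[]"] by simp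
    then show ?thesis by (simp add: blocks_no_gap_kappa_lact_arg)
  qed
  have "mom (z # Ys) = head_sum z Ys + blocks (no_gap \<kappa>) [] [z] Ys"
    using mom_eq_blocks[of "z # Ys"] by (simp add: head_sum_def blocks_no_gap_single)
  also have "blocks (no_gap \<kappa>) [] [z] Ys = pivot_sum (\<lambda>A q R. blocks (no_gap \<kappa>) [weighted (z # A) q] [] R) Ys"
    using blocks_first[of "no_gap \<kappa>" "[]" "[z]" Ys] by simp
  also have "\<dots> = pivot_sum (\<lambda>A q R. split_sum (\<lambda>A1 A2. head_sum z A1 * blocks (no_gap \<kappa>) [weighted A2 q] [] R) A) Ys"
    unfolding pivot_sum_def by (intro sum.cong refl inner) (simp add: id_take_nth_drop)
  also have "\<dots> = split_sum (\<lambda>X1 X2. head_sum z X1 * mom X2 - (if X2 = [] then head_sum z X1 else 0)) Ys"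
    unfolding split_sum_pivot_sum_assoc[symmetric]
    by (rule split_sum_cong) (auto simp: mom_eq_pivot_sum mult_pivot_sum)
  also have "\<dots> = split_sum (\<lambda>A1 A2. head_sum z A1 * mom A2) Ys - head_sum z Ys"
    by (simp add: split_sum_diff split_sum_only_last[where f = "\<lambda>X1 X2. if X2 = [] then head_sum z X1 else 0"])
  finally show ?case by simp
qed

text \<open>\<open>\<kappa> (P @ (v * z) # Q)\<close> equals \<open>\<kappa> (P @ v # z # Q)\<close> plus the
  terms in which a cumulant ending in \<open>v\<close>, resp. starting with \<open>z\<close>, is nested into an
  argument. \<open>product_defect\<close> is the error term, shown to vanish below.\<close>

definition left_nest :: "'a list \<Rightarrow> 'a \<Rightarrow> 'a \<Rightarrow> 'a list \<Rightarrow> 'b" where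
  "left_nest P v z Q = split_sum (\<lambda>A B. \<kappa> (A @ lact (\<kappa> (B @ [v])) z # Q)) P"

definition right_nest :: "'a list \<Rightarrow> 'a \<Rightarrow> 'a \<Rightarrow> 'a list \<Rightarrow> 'b" where
  "right_nest P v z Q = pivot_sum (\<lambda>A c B. \<kappa> (P @ v # lact (\<kappa> (z # A)) c # B)) Q"

definition product_defect :: "'a list \<Rightarrow> 'a \<Rightarrow> 'a \<Rightarrow> 'a list \<Rightarrow> 'b" where
  "product_defect P v z Q = \<kappa> (P @ (v * z) # Q) - \<kappa> (P @ v # z # Q) - left_nest P v z Q - right_nest P v z Q"

lemma blocks_no_gap_gap_prod_list:
  assumes "g \<noteq> []" and "g' \<noteq> []" and "prod_list g = prod_list g'"
  shows "blocks (no_gap F) P g xs = blocks (no_gap F) P g' xs"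
  using assms
proof (induction xs arbitrary: P g g')
  case Nil
  then show ?case by simp
next
  case (Cons x xs)
  then have "weighted g x = weighted g' x" by (simp add: weighted_def mom_def)
  then show ?case using Cons.IH[of "g @ [x]" "g' @ [x]"] Cons.prems by simp
qed

lemma blocks_no_gap_right_nest:
  "blocks (no_gap (pivot_sum (\<lambda>A c B. \<kappa> (X @ lact (\<kappa> (z # A)) c # B)))) [] [] Q = blocks (no_gap \<kappa>) X [z] Q"
proof -
  define \<Psi> where "\<Psi> = (\<lambda>A1 c L. \<kappa> (X @ lact (\<kappa> (z # A1)) c # L))"
  define G where "G = (\<lambda>A B. case B of [] \<Rightarrow> 0 | c # B' \<Rightarrow> \<Psi> A c B')"
  have G_split: "pivot_sum (\<lambda>A c B. \<kappa> (X @ lact (\<kappa> (z # A)) c # B)) = split_sum G"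
    unfolding G_def \<Psi>_def by (simp add: fun_eq_iff pivot_sum_conv_split_sum)
  have G_first: "blocks (no_gap (G A1)) [] [] X2 = pivot_sum (\<lambda>A q R. blocks (no_gap (\<Psi> A1 (weighted A q))) [] [] R) X2"
    for A1 X2
    using blocks_no_gap_first[of X2 "G A1" "[]"] by (simp add: G_def)
  have inner: "blocks (no_gap \<kappa>) (X @ [weighted (z # A) q]) [] R
      = split_sum (\<lambda>A1 A2. blocks (no_gap (\<lambda>B. blocks (no_gap (\<Psi> B (weighted A2 q))) [] [] R)) [] [] A1) A"
    for A q R
  proof -
    define h where "h c k = blocks (no_gap \<kappa>) (X @ [lact k c]) [] R" for c k
    have h_add: "h c (k + k') = h c k + h c k'" for c k k'
      unfolding h_def by (simp add: lact_add_left blocks_no_gap_kappa_add_last_arg)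
    have "blocks (no_gap \<kappa>) (X @ [weighted (z # A) q]) [] R
        = split_sum (\<lambda>A1 A2. h (weighted A2 q) (head_sum z A1)) A"
      unfolding weighted_Cons_eq_split_sum[OF mom_Cons_eq_split_sum]
      using additive_split_sum[of "\<lambda>c. blocks (no_gap \<kappa>) (X @ [c]) [] R", OF blocks_no_gap_kappa_add_last_arg]
      by (simp add: h_def)
    also have "\<dots> = split_sum (\<lambda>A1 A2. blocks (no_gap (\<lambda>L. h (weighted A2 q) (\<kappa> (z # L)))) [] [] A1) A"
      unfolding head_sum_def by (simp add: additive_blocks_no_gap h_add)
    also have "\<dots> = split_sum (\<lambda>A1 A2. blocks (no_gap (\<lambda>B. blocks (no_gap (\<Psi> B (weighted A2 q))) [] [] R)) [] [] A1) A"
      unfolding h_def \<Psi>_def by (subst blocks_no_gap_shift) simp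
    finally show ?thesis .
  qed
  have "blocks (no_gap (split_sum G)) [] [] Q
      = split_sum (\<lambda>X1 X2. blocks (no_gap (\<lambda>A1. pivot_sum (\<lambda>A q R.
          blocks (no_gap (\<Psi> A1 (weighted A q))) [] [] R) X2)) [] [] X1) Q"
    by (simp add: blocks_no_gap_split_sum_args G_first)
  also have "\<dots> = pivot_sum (\<lambda>A q R. split_sum (\<lambda>A1 A2.
      blocks (no_gap (\<lambda>B. blocks (no_gap (\<Psi> B (weighted A2 q))) [] [] R)) [] [] A1) A) Q"
    by (simp add: blocks_no_gap_pivot_sum split_sum_pivot_sum_assoc)
  also have "\<dots> = pivot_sum (\<lambda>A q R. blocks (no_gap \<kappa>) (X @ [weighted (z # A) q]) [] R) Q"
    by (simp add: inner)
  also have "\<dots> = blocks (no_gap \<kappa>) X [z] Q"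
    using blocks_first[of "no_gap \<kappa>" X "[z]" Q] by simp
  finally show ?thesis unfolding G_split .
qed

lemma blocks_left_nest:
  "blocks (\<lambda>P' g. blocks (no_gap (left_nest P' (weighted g v) z)) [] [] Q) [] [] P
   = blocks (\<lambda>P' g. blocks (no_gap \<kappa>) (P' @ [weighted (g @ [v]) z]) [] Q) [] [] P"
proof -
  define H where "H A c = blocks (no_gap (\<lambda>L. \<kappa> (A @ lact c z # L))) [] [] Q" for A c
  have H_add: "H A (c + c') = H A c + H A c'" for A c c'
    unfolding H_def by (simp add: lact_add_left kappa_add blocks_no_gap_add)
  have nest: "blocks (no_gap (left_nest P' V z)) [] [] Q = split_sum (\<lambda>A B. H A (\<kappa> (B @ [V]))) P'" for P' V
    unfolding left_nest_def H_def by (rule blocks_no_gap_split_sum)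
  have absorb: "split_sum (\<lambda>A h. blocks (no_gap (\<lambda>B. H P' (\<kappa> (B @ [weighted h v])))) [] [] A) g
      = blocks (no_gap \<kappa>) (P' @ [weighted (g @ [v]) z]) [] Q" for P' g
  proof -
    have "blocks (no_gap \<kappa>) (P' @ [weighted (g @ [v]) z]) [] Q = H P' (mom (g @ [v]))"
      unfolding H_def weighted_def by (subst blocks_no_gap_shift) simp
    also have "\<dots> = H P' (split_sum (\<lambda>A h. blocks (no_gap (\<lambda>B. \<kappa> (B @ [weighted h v]))) [] [] A) g)"
      by (simp add: mom_eq_blocks blocks_no_gap_snoc)
    also have "\<dots> = split_sum (\<lambda>A h. blocks (no_gap (\<lambda>B. H P' (\<kappa> (B @ [weighted h v])))) [] [] A) g"
      by (simp add: additive_split_sum additive_blocks_no_gap H_add)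
    finally show ?thesis ..
  qed
  have "blocks (\<lambda>P' g. blocks (no_gap (left_nest P' (weighted g v) z)) [] [] Q) [] [] P
      = split_sum (\<lambda>P1 g. blocks (no_gap (split_sum (\<lambda>A B. H A (\<kappa> (B @ [weighted g v]))))) [] [] P1) P"
    unfolding nest by (rule blocks_eq_split_sum)
  also have "\<dots> = split_sum (\<lambda>P1 g. split_sum (\<lambda>X1 X2. blocks (no_gap (\<lambda>A.
      blocks (no_gap (\<lambda>B. H A (\<kappa> (B @ [weighted g v])))) [] [] X2)) [] [] X1) P1) P"
    by (simp add: blocks_no_gap_split_sum_args)
  also have "\<dots> = split_sum (\<lambda>P1 g. blocks (no_gap (\<lambda>P'. split_sum (\<lambda>A h.
      blocks (no_gap (\<lambda>B. H P' (\<kappa> (B @ [weighted h v])))) [] [] A) g)) [] [] P1) P"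
    by (simp add: split_sum_assoc blocks_no_gap_split_sum)
  also have "\<dots> = blocks (\<lambda>P' g. blocks (no_gap \<kappa>) (P' @ [weighted (g @ [v]) z]) [] Q) [] [] P"
    unfolding absorb by (rule blocks_eq_split_sum[symmetric])
  finally show ?thesis .
qed

lemma weighted_times: "weighted g (u * w) = weighted g u * w"
  by (simp add: weighted_def lact_times)

text \<open>Expanding \<open>mom (P @ (v * z) # Q) = mom (P @ v # z # Q)\<close> into blocks, the terms in which
  \<open>v\<close> and \<open>z\<close> go to different blocks are matched by the nested terms, so the defects cancel
  in total.\<close>

lemma blocks_product_defect:
  "blocks (\<lambda>P' g. blocks (no_gap (product_defect P' (weighted g v) z)) [] [] Q) [] [] P = 0"
proof -
  define B1 where "B1 = (\<lambda>P' g. blocks (no_gap \<kappa>) (P' @ [weighted g v, z]) [] Q)"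
  define B2 where "B2 = (\<lambda>P' g. blocks (no_gap \<kappa>) (P' @ [weighted g v]) [z] Q)"
  define B3 where "B3 = (\<lambda>P' g. blocks (no_gap \<kappa>) (P' @ [weighted (g @ [v]) z]) [] Q)"
  define B4 where "B4 = (\<lambda>P' g. blocks (no_gap \<kappa>) P' (g @ [v, z]) Q)"
  define Bl where "Bl = (\<lambda>P' g. blocks (no_gap (left_nest P' (weighted g v) z)) [] [] Q)"
  define Bd where "Bd = (\<lambda>P' g. blocks (no_gap (product_defect P' (weighted g v) z)) [] [] Q)"
  have merged: "blocks (no_gap \<kappa>) (P' @ [weighted g v * z]) [] Q = B1 P' g + Bl P' g + B2 P' g + Bd P' g" for P' g
  proof -
    let ?V = "weighted g v"
    have "(\<lambda>L. \<kappa> (P' @ (?V * z) # L)) = (\<lambda>L. \<kappa> ((P' @ [?V, z]) @ L)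
        + left_nest P' ?V z L + right_nest P' ?V z L + product_defect P' ?V z L)"
      by (simp add: fun_eq_iff product_defect_def)
    then have "blocks (no_gap \<kappa>) (P' @ [?V * z]) [] Q = blocks (no_gap (\<lambda>L. \<kappa> ((P' @ [?V, z]) @ L))) [] [] Q
        + Bl P' g + blocks (no_gap (right_nest P' ?V z)) [] [] Q + Bd P' g"
      by (subst blocks_no_gap_shift) (simp add: blocks_no_gap_add Bl_def Bd_def)
    moreover have "blocks (no_gap (\<lambda>L. \<kappa> ((P' @ [?V, z]) @ L))) [] [] Q = B1 P' g"
      unfolding B1_def by (rule blocks_no_gap_shift[symmetric])
    moreover have "right_nest P' ?V z = pivot_sum (\<lambda>A c B. \<kappa> ((P' @ [?V]) @ lact (\<kappa> (z # A)) c # B))"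
      by (simp add: fun_eq_iff right_nest_def)
    then have "blocks (no_gap (right_nest P' ?V z)) [] [] Q = B2 P' g"
      unfolding B2_def using blocks_no_gap_right_nest[of "P' @ [?V]" z Q] by simp
    ultimately show ?thesis by simp
  qed
  have "blocks (\<lambda>P' g. B1 P' g + Bl P' g + B2 P' g + Bd P' g + B4 P' g) [] [] P = mom (P @ (v * z) # Q)"
    using mom_eq_blocks[of "P @ (v * z) # Q"] merged
      blocks_no_gap_gap_prod_list[of "_ @ [v * z]" "_ @ [v, z]" \<kappa> _ Q]
    by (simp add: blocks_append weighted_times B4_def)
  also have "\<dots> = mom (P @ v # z # Q)"
    by (simp add: mom_def mult.assoc)
  also have "\<dots> = blocks (\<lambda>P' g. B1 P' g + B2 P' g + B3 P' g + B4 P' g) [] [] P"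
    using mom_eq_blocks[of "P @ v # z # Q"] by (simp add: blocks_append B1_def B2_def B3_def B4_def add.assoc)
  finally have "blocks Bl [] [] P + blocks Bd [] [] P = blocks B3 [] [] P"
    by (simp add: blocks_add algebra_simps)
  moreover have "blocks Bl [] [] P = blocks B3 [] [] P"
    unfolding Bl_def B3_def by (rule blocks_left_nest)
  ultimately show ?thesis by (simp add: Bd_def)
qed

lemma product_defect_eq_0: "product_defect P v z Q = 0"
proof (induction "length P + length Q" arbitrary: P v z Q rule: less_induct)
  case less
  have shorter: "product_defect P' v' z' Q' = 0" if "length P' + length Q' < length P + length Q" for P' v' z' Q'
    using less that by blast
  have top: "blocks (no_gap (product_defect P' v' z)) [] [] Q = product_defect P' v' z Q"
    if "length P' \<le> length P" for P' v'
    by (rule blocks_no_gap_eq_finest) (use shorter that in auto)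
  have "blocks (\<lambda>P' g. blocks (no_gap (product_defect P' (weighted g v) z)) [] [] Q) [] [] P
      = blocks (\<lambda>P' g. product_defect P' (weighted g v) z Q) [] [] P"
    by (rule blocks_cong) (use top in simp)
  also have "\<dots> = product_defect P v z Q"
  proof (cases "P = []")
    case False
    have "blocks (\<lambda>P' g. product_defect P' (weighted g v) z Q) [] [] P = product_defect ([] @ P) (weighted [] v) z Q"
      by (rule blocks_eq_finest[OF False]) (use shorter in auto)
    then show ?thesis by simp
  qed simp
  finally show ?case using blocks_product_defect[of v z Q P] by simp
qed

lemma mom_snoc_const: "mom (P @ [lact \<beta> 1]) = mom P * \<beta>"
  by (simp add: mom_def times_lact_one E_ract)

lemma kappa_single_const: "\<kappa> [lact \<beta> 1] = \<beta>"
  by (simp add: kappa_single E_lact)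

text \<open>Cumulants with a constant argument \<open>lact \<beta> 1\<close> vanish: a constant followed by a letter
  \<open>z\<close> is merged with it by the product formula, and a constant last argument is split off the
  moment, \<open>mom (P @ [lact \<beta> 1]) = mom P * \<beta>\<close>.\<close>

lemma kappa_const_Cons_eq_0:
  assumes shorter: "\<And>P' Q' \<beta>'. length P' + length Q' < length P + length (z # Q) \<Longrightarrow> P' @ Q' \<noteq> [] \<Longrightarrow>
      \<kappa> (P' @ lact \<beta>' 1 # Q') = 0"
  shows "\<kappa> (P @ lact \<beta> 1 # z # Q) = 0"
proof -
  have "left_nest P (lact \<beta> 1) z Q = \<kappa> (P @ lact \<beta> z # Q)"
    unfolding left_nest_def
  proof (subst split_sum_only_last)
    fix A B assume "P = A @ B" and "B \<noteq> []"
    then have "\<kappa> ([] @ B @ [lact \<beta> 1]) = 0"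
      using shorter[of B "[]"] by (simp add: append_eq_Cons_conv)
    then show "\<kappa> (A @ lact (\<kappa> (B @ [lact \<beta> 1])) z # Q) = 0" by (simp add: kappa_0)
  qed (simp add: kappa_single_const)
  moreover have "right_nest P (lact \<beta> 1) z Q = 0"
    unfolding right_nest_def by (rule pivot_sum_eq_0) (use shorter in auto)
  ultimately show ?thesis
    using product_defect_eq_0[of P "lact \<beta> 1" z Q] by (simp add: product_defect_def lact_one_times)
qed

lemma kappa_snoc_const_eq_0:
  assumes "P \<noteq> []"
    and shorter: "\<And>P' \<beta>'. P' \<noteq> [] \<Longrightarrow> length P' < length P \<Longrightarrow> \<kappa> (P' @ [lact \<beta>' 1]) = 0"
  shows "\<kappa> (P @ [lact \<beta> 1]) = 0"
proof -
  have "mom (P @ [lact \<beta> 1]) = split_sum (\<lambda>A g. blocks (no_gap (\<lambda>L. \<kappa> (L @ [weighted g (lact \<beta> 1)]))) [] [] A) P"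
    by (simp add: mom_eq_blocks blocks_no_gap_snoc)
  also have "\<dots> = blocks (no_gap (\<lambda>L. \<kappa> (L @ [weighted P (lact \<beta> 1)]))) [] [] []
                 + blocks (no_gap (\<lambda>L. \<kappa> (L @ [weighted [] (lact \<beta> 1)]))) [] [] P"
  proof (rule split_sum_only_ends[OF assms(1)])
    fix A B assume "P = A @ B" and "A \<noteq> []" and "B \<noteq> []"
    show "blocks (no_gap (\<lambda>L. \<kappa> (L @ [weighted B (lact \<beta> 1)]))) [] [] A = 0"
    proof (rule blocks_no_gap_eq_0)
      fix L :: "'a list" assume "L \<noteq> []" and "length L \<le> length A"
      moreover have "length A < length P" using \<open>P = A @ B\<close> \<open>B \<noteq> []\<close> by simp
      ultimately show "\<kappa> (L @ [weighted B (lact \<beta> 1)]) = 0"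
        using shorter[of L "mom B * \<beta>"] by (simp add: weighted_def lact_mult[symmetric])
    qed fact
  qed
  also have "\<dots> = mom P * \<beta> + \<kappa> (P @ [lact \<beta> 1])"
    using shorter by (simp add: weighted_def lact_mult[symmetric] kappa_single_const blocks_no_gap_eq_finest)
  finally show ?thesis by (simp add: mom_snoc_const)
qed

lemma kappa_const_arg_eq_0: "P @ Q \<noteq> [] \<Longrightarrow> \<kappa> (P @ lact \<beta> 1 # Q) = 0"
proof (induction "length P + length Q" arbitrary: P Q \<beta> rule: less_induct)
  case less
  show ?case
  proof (cases Q)
    case Nil
    then show ?thesis
      using less kappa_snoc_const_eq_0[of P \<beta>] by (metis add.right_neutral append_Nil2 list.size(3))
  next
    case (Cons z Q')
    then show ?thesis
      using less kappa_const_Cons_eq_0[of P z Q' \<beta>] by blast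
  qed
qed

text \<open>If the moments of all infixes of \<open>V\<close> vanish, every block term with a non-empty gap
  vanishes, and only \<open>\<kappa> V\<close> survives.\<close>

lemma blocks_if_infix_moments_vanish:
  assumes vanish: "\<And>i j. i < j \<Longrightarrow> j \<le> length V \<Longrightarrow> mom (drop i (take j V)) = 0"
  shows "i \<le> k \<Longrightarrow> k \<le> length V \<Longrightarrow>
    blocks (no_gap \<kappa>) P (drop i (take k V)) (drop k V) = (if i = k then \<kappa> (P @ drop k V) else 0)"
proof (induction "length V - k" arbitrary: k i P)
  case 0
  then show ?case by (auto simp: no_gap_def)
next
  case (Suc d)
  then have k: "k < length V" by simp
  then have V_k: "drop k V = V ! k # drop (Suc k) V" by (simp add: Cons_nth_drop_Suc)
  let ?g = "drop i (take k V)"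
  have "blocks (no_gap \<kappa>) (P @ [weighted ?g (V ! k)]) [] (drop (Suc k) V)
      = \<kappa> (P @ weighted ?g (V ! k) # drop (Suc k) V)"
    using Suc.hyps(1)[of "Suc k" "Suc k" "P @ [weighted ?g (V ! k)]"] Suc.hyps(2) k by simp
  moreover have "blocks (no_gap \<kappa>) P (?g @ [V ! k]) (drop (Suc k) V) = 0"
    using Suc.hyps(1)[of "Suc k" i P] Suc.hyps(2) Suc.prems k by (simp add: take_Suc_conv_app_nth)
  moreover have "weighted ?g (V ! k) = 0" if "i \<noteq> k"
    using vanish[of i k] that Suc.prems k by (simp add: weighted_def)
  ultimately show ?case
    unfolding V_k by (cases "i = k") (simp_all add: kappa_0)
qed

lemma mom_eq_kappa_if_infix_moments_vanish:
  assumes "\<And>i j. i < j \<Longrightarrow> j \<le> length V \<Longrightarrow> mom (drop i (take j V)) = 0" and "V \<noteq> []"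
  shows "mom V = \<kappa> V"
  using mom_eq_blocks[OF assms(2)] blocks_if_infix_moments_vanish[OF assms(1), of 0 0 "[]"] by simp

lemma kappa_centered:
  assumes "2 \<le> length xs"
  shows "\<kappa> (map (\<lambda>u. u - lact (E u) 1) xs) = \<kappa> xs"
proof -
  let ?c = "\<lambda>u. u - lact (E u) 1"
  have "\<kappa> (map ?c (take k xs) @ drop k xs) = \<kappa> xs" if "k \<le> length xs" for k
    using that
  proof (induction k)
    case 0
    then show ?case by simp
  next
    case (Suc k)
    then have k: "k < length xs" by simp
    let ?A = "map ?c (take k xs)" and ?B = "drop (Suc k) xs"
    have "?A @ ?B \<noteq> []" using assms k by (cases "?B = []") auto
    then have "\<kappa> (?A @ ?c (xs ! k) # ?B) = \<kappa> (?A @ xs ! k # ?B)"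
      by (simp add: kappa_diff kappa_const_arg_eq_0)
    then show ?case
      using Suc k by (simp add: take_Suc_conv_app_nth Cons_nth_drop_Suc)
  qed
  from this[of "length xs"] show ?thesis by simp
qed

end

section \<open>Vanishing of mixed cumulants\<close>

locale free_B_cumulants = B_cumulants smB smA lact ract E \<kappa>
  for smB :: "'k::field_char_0 \<Rightarrow> 'b::ring_1 \<Rightarrow> 'b"
    and smA :: "'k \<Rightarrow> 'a::ring_1 \<Rightarrow> 'a"
    and lact :: "'b \<Rightarrow> 'a \<Rightarrow> 'a" and ract :: "'a \<Rightarrow> 'b \<Rightarrow> 'a"
    and E :: "'a \<Rightarrow> 'b" and \<kappa> :: "'a list \<Rightarrow> 'b" +
  fixes a b :: 'a
  assumes free: "free_pair smA lact ract E a b"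
begin

definition alg :: "bool \<Rightarrow> 'a set" where
  "alg l = B_gen smA lact ract (if l then a else b)"

lemma alg_lact: "u \<in> alg l \<Longrightarrow> lact c u \<in> alg l"
  unfolding alg_def by (rule B_gen.gen_lact)

lemma alg_mult: "u \<in> alg l \<Longrightarrow> v \<in> alg l \<Longrightarrow> u * v \<in> alg l"
  unfolding alg_def by (rule B_gen.gen_mult)

definition in_algs :: "(bool \<times> 'a) list \<Rightarrow> bool" where
  "in_algs w \<longleftrightarrow> (\<forall>(l, u) \<in> set w. u \<in> alg l)"

definition mixed :: "(bool \<times> 'a) list \<Rightarrow> bool" where
  "mixed w \<longleftrightarrow> True \<in> fst ` set w \<and> False \<in> fst ` set w"

lemma in_algs_simps [simp]:
  "in_algs []"
  "in_algs (p # w) \<longleftrightarrow> snd p \<in> alg (fst p) \<and> in_algs w"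
  "in_algs (w @ w') \<longleftrightarrow> in_algs w \<and> in_algs w'"
  by (auto simp: in_algs_def split: prod.splits)

lemma alg_diff_const: "u \<in> alg l \<Longrightarrow> u - lact c 1 \<in> alg l"
  unfolding alg_def
  using B_gen.gen_add[OF _ B_gen.gen_lact[OF B_gen.gen_one], of u smA lact ract _ "- c"]
  by (simp add: lact_minus_left)

lemma mixed_length: "mixed w \<Longrightarrow> 2 \<le> length w"
  by (cases w rule: remdups_adj.cases) (auto simp: mixed_def)

lemma not_mixed_imp_labels: "\<not> mixed w \<Longrightarrow> l \<in> fst ` set w \<Longrightarrow> fst ` set w \<subseteq> {l}"
  unfolding mixed_def by (cases l) auto

lemma mom_alternating_infix_eq_0:
  assumes "in_algs w" and "\<forall>p \<in> set w. E (snd p) = 0"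
    and alternating: "\<And>k. Suc k < length w \<Longrightarrow> fst (w ! k) \<noteq> fst (w ! Suc k)"
    and "i < j" and "j \<le> length w"
  shows "mom (drop i (take j (map snd w))) = 0"
proof -
  let ?W = "drop i (take j w)"
  have "E (prod_list (map snd ?W)) = 0"
  proof (rule free[unfolded free_pair_def, rule_format])
    show "?W \<noteq> []" using assms(4,5) by simp
    show "case p of (l, u) \<Rightarrow> E u = 0 \<and> u \<in> B_gen smA lact ract (if l then a else b)"
      if "p \<in> set ?W" for p
    proof -
      have "p \<in> set w" using that by (meson in_set_dropD in_set_takeD)
      then show ?thesis
        unfolding alg_def[symmetric] using assms(1,2) by (auto simp: in_algs_def)
    qed
    show "fst (?W ! k) \<noteq> fst (?W ! Suc k)" if "Suc k < length ?W" for k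
      using alternating[of "i + k"] that assms(4,5) by simp
  qed
  then show ?thesis by (simp add: mom_def drop_map take_map)
qed

lemma kappa_alternating_eq_0:
  assumes "in_algs w" and "mixed w"
    and alternating: "\<And>k. Suc k < length w \<Longrightarrow> fst (w ! k) \<noteq> fst (w ! Suc k)"
  shows "\<kappa> (map snd w) = 0"
proof -
  define w0 where "w0 = map (\<lambda>(l, u). (l, u - lact (E u) 1)) w"
  have len: "2 \<le> length w" using mixed_length[OF assms(2)] .
  then have "w0 \<noteq> []" by (auto simp: w0_def)
  have "in_algs w0" using assms(1) by (auto simp: in_algs_def w0_def alg_diff_const)
  moreover have "\<forall>p \<in> set w0. E (snd p) = 0" by (auto simp: w0_def E_diff E_lact)
  moreover have "fst (w0 ! k) \<noteq> fst (w0 ! Suc k)" if "Suc k < length w0" for k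
    using alternating[of k] that by (simp add: w0_def split_def)
  ultimately have vanish: "mom (drop i (take j (map snd w0))) = 0" if "i < j" "j \<le> length w0" for i j
    using mom_alternating_infix_eq_0 that by blast
  have "\<kappa> (map snd w) = \<kappa> (map snd w0)"
    using kappa_centered[of "map snd w"] len by (simp add: w0_def case_prod_beta comp_def)
  also have "\<dots> = mom (map snd w0)"
    using len vanish by (intro mom_eq_kappa_if_infix_moments_vanish[symmetric]) (auto simp: w0_def)
  also have "\<dots> = 0"
    using vanish[of 0 "length w0"] \<open>w0 \<noteq> []\<close> by simp
  finally show ?thesis .
qed

text \<open>The nested terms of the product formula for a word containing two adjacent letters
  with the same label: either the inner or the outer cumulant is mixed and shorter.\<close>

lemma kappa_nest_eq_0:
  assumes IH: "\<And>w'. length w' < length w \<Longrightarrow> in_algs w' \<Longrightarrow> mixed w' \<Longrightarrow> \<kappa> (map snd w') = 0"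
    and "mixed w"
    and "in_algs Win" and "length Win < length w" and "l \<in> fst ` set Win"
    and "y \<in> alg l'"
    and "in_algs (Wl @ Wr)" and "length Wl + length Wr + 1 < length w"
    and "l \<in> fst ` set (Wl @ (l', y) # Wr)"
    and cover: "fst ` set w \<subseteq> fst ` set Win \<union> fst ` set (Wl @ (l', y) # Wr)"
  shows "\<kappa> (map snd Wl @ lact (\<kappa> (map snd Win)) y # map snd Wr) = 0"
proof (cases "mixed Win")
  case True
  then have "\<kappa> (map snd Win) = 0" using IH assms(3,4) by blast
  then show ?thesis by (simp add: kappa_0)
next
  case Win: False
  define Wo where "Wo = Wl @ (l', lact (\<kappa> (map snd Win)) y) # Wr"
  have labels: "fst ` set Wo = fst ` set (Wl @ (l', y) # Wr)" by (simp add: Wo_def)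
  show ?thesis
  proof (cases "mixed Wo")
    case True
    moreover have "in_algs Wo" using assms(6,7) alg_lact by (simp add: Wo_def)
    moreover have "length Wo < length w" using assms(8) by (simp add: Wo_def)
    ultimately have "\<kappa> (map snd Wo) = 0" using IH by blast
    then show ?thesis by (simp add: Wo_def)
  next
    case False
    have "fst ` set Wo \<subseteq> {l}"
      using not_mixed_imp_labels[OF False] assms(9) labels by simp
    then have "fst ` set w \<subseteq> {l}"
      using subset_trans[OF cover[folded labels] Un_least[OF not_mixed_imp_labels[OF Win assms(5)]]] by blast
    then show ?thesis using assms(2) unfolding mixed_def by blast
  qed
qed

lemma kappa_adjacent_eq_0:
  assumes IH: "\<And>w'. length w' < length w \<Longrightarrow> in_algs w' \<Longrightarrow> mixed w' \<Longrightarrow> \<kappa> (map snd w') = 0"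
    and w: "w = Wp @ (l, x) # (l, z) # Wq" and "in_algs w" and "mixed w"
  shows "\<kappa> (map snd w) = 0"
proof -
  let ?P = "map snd Wp" and ?Q = "map snd Wq"
  have x: "x \<in> alg l" and z: "z \<in> alg l" and "in_algs Wp" "in_algs Wq"
    using assms(3) by (simp_all add: w)
  have labels: "fst ` set w = fst ` set (Wp @ (l, x * z) # Wq)" by (auto simp: w)
  have "\<kappa> (?P @ (x * z) # ?Q) = 0"
    using IH[of "Wp @ (l, x * z) # Wq"] assms(3,4) alg_mult[OF x z] labels
    by (simp add: w mixed_def)
  moreover have "left_nest ?P x z ?Q = 0"
    unfolding left_nest_def split_sum_map
  proof (rule split_sum_eq_0)
    fix Wa Wb assume "Wp = Wa @ Wb"
    then have "\<kappa> (map snd Wa @ lact (\<kappa> (map snd (Wb @ [(l, x)]))) z # ?Q) = 0"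
      using assms(3) kappa_nest_eq_0[where Win = "Wb @ [(l, x)]" and l = l and y = z
          and l' = l and Wl = Wa and Wr = Wq, OF IH assms(4)] by (auto simp: w)
    then show "\<kappa> (map snd Wa @ lact (\<kappa> (map snd Wb @ [x])) z # ?Q) = 0" by simp
  qed
  moreover have "right_nest ?P x z ?Q = 0"
    unfolding right_nest_def pivot_sum_map
  proof (rule pivot_sum_eq_0)
    fix Wa c Wb assume "Wq = Wa @ c # Wb"
    then have "\<kappa> (map snd (Wp @ [(l, x)]) @ lact (\<kappa> (map snd ((l, z) # Wa))) (snd c) # map snd Wb) = 0"
      using assms(3) kappa_nest_eq_0[where Win = "(l, z) # Wa" and l = l and y = "snd c"
          and l' = "fst c" and Wl = "Wp @ [(l, x)]" and Wr = Wb, OF IH assms(4)] by (auto simp: w)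
    then show "\<kappa> (?P @ x # lact (\<kappa> (z # map snd Wa)) (snd c) # map snd Wb) = 0" by simp
  qed
  ultimately show ?thesis
    using product_defect_eq_0[of ?P x z ?Q] by (simp add: product_defect_def w)
qed

theorem kappa_mixed_eq_0: "in_algs w \<Longrightarrow> mixed w \<Longrightarrow> \<kappa> (map snd w) = 0"
proof (induction "length w" arbitrary: w rule: less_induct)
  case less
  show ?case
  proof (cases "\<exists>k. Suc k < length w \<and> fst (w ! k) = fst (w ! Suc k)")
    case True
    then obtain k where k: "Suc k < length w" "fst (w ! k) = fst (w ! Suc k)" by blast
    obtain l x z where "w ! k = (l, x)" and "w ! Suc k = (l, z)"
      using k(2) by (cases "w ! k", cases "w ! Suc k") auto
    then have "w = take k w @ (l, x) # (l, z) # drop (Suc (Suc k)) w"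
      using k(1) by (metis Cons_nth_drop_Suc Suc_lessD id_take_nth_drop)
    then show ?thesis using kappa_adjacent_eq_0 less by blast
  next
    case False
    then show ?thesis using kappa_alternating_eq_0 less.prems by blast
  qed
qed

section \<open>Trees that do not split\<close>

definition alternating_algs :: "nat \<Rightarrow> 'a list \<Rightarrow> bool" where
  "alternating_algs off as \<longleftrightarrow> (\<forall>k < length as. as ! k \<in> alg (even (off + k)))"

lemma alternating_algs_take: "alternating_algs off as \<Longrightarrow> alternating_algs off (take n as)"
  by (simp add: alternating_algs_def)

lemma alternating_algs_drop: "alternating_algs off as \<Longrightarrow> alternating_algs (off + n) (drop n as)"
  by (simp add: alternating_algs_def add.assoc del: even_add)

text \<open>The arguments \<open>spine_args\<close> of \<open>\<kappa>\<^sub>t\<close>, each tagged with the parity of the letter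
  \<open>a\<^sub>j\<^sub>i\<close> it ends with; the vertices of \<open>t\<close> are \<open>off + 1, \<dots>, off + tsize t\<close>, and a letter
  at 0-based position \<open>k\<close> of the whole word comes from the algebra of \<open>a\<close> iff \<open>k\<close> is even.\<close>

primrec spine_word :: "nat \<Rightarrow> ptree \<Rightarrow> 'a list \<Rightarrow> (bool \<times> 'a) list" where
  "spine_word off Leaf as = []"
| "spine_word off (Node l r) as =
     (even (off + tsize l), lact (kappa_tree lact \<kappa> l (take (tsize l) as)) (as ! tsize l))
     # spine_word (Suc (off + tsize l)) r (drop (Suc (tsize l)) as)"

lemma map_snd_spine_word: "map snd (spine_word off t as) = spine_args lact \<kappa> t as"
proof (induction t arbitrary: off as)
  case (Node l r)
  then show ?case by (simp only: spine_word.simps list.map spine_args_Node snd_conv)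
qed simp

lemma in_algs_spine_word:
  "length as = tsize t \<Longrightarrow> alternating_algs off as \<Longrightarrow> in_algs (spine_word off t as)"
proof (induction t arbitrary: off as)
  case Leaf
  then show ?case by simp
next
  case (Node l r)
  have "alternating_algs (Suc (off + tsize l)) (drop (Suc (tsize l)) as)"
    using alternating_algs_drop[OF Node.prems(2), of "Suc (tsize l)"] by simp
  then have "in_algs (spine_word (Suc (off + tsize l)) r (drop (Suc (tsize l)) as))"
    using Node.IH(2) Node.prems(1) by simp
  moreover have "as ! tsize l \<in> alg (even (off + tsize l))"
    using Node.prems unfolding alternating_algs_def by simp
  ultimately show ?case by (simp add: alg_lact)
qed

definition degenerate :: "(bool \<times> 'a) list \<Rightarrow> bool" where
  "degenerate w \<longleftrightarrow> 0 \<in> snd ` set w \<or> mixed w"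

lemma degenerate_Cons: "degenerate w \<Longrightarrow> degenerate (p # w)"
  by (auto simp: degenerate_def mixed_def)

lemma kappa_degenerate_eq_0:
  assumes "in_algs w" and "degenerate w"
  shows "\<kappa> (map snd w) = 0"
  using assms(2) unfolding degenerate_def
proof
  assume "0 \<in> snd ` set w"
  then obtain P Q where "map snd w = P @ 0 # Q" by (metis list.set_map split_list)
  then show ?thesis by (simp add: kappa_0)
qed (use assms(1) kappa_mixed_eq_0 in blast)

lemma kappa_tree_eq_0_if_degenerate:
  assumes "t \<noteq> Leaf" and "length as = tsize t" and "alternating_algs off as"
    and "degenerate (spine_word off t as)"
  shows "kappa_tree lact \<kappa> t as = 0"
proof -
  obtain l r where "t = Node l r" using assms(1) by (cases t) auto
  then have "kappa_tree lact \<kappa> t as = \<kappa> (map snd (spine_word off t as))"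
    by (simp only: map_snd_spine_word kappa_tree_Node)
  also have "\<dots> = 0"
    using kappa_degenerate_eq_0 in_algs_spine_word assms(2-4) by blast
  finally show ?thesis .
qed

text \<open>A right-child edge between vertices of different parity makes the spine word
  degenerate: at the root the two spine letters come from different algebras, in the left
  subtree the first argument vanishes, and in the right subtree degeneracy is inherited.\<close>

lemma spine_word_degenerate:
  "length as = tsize t \<Longrightarrow> alternating_algs off as \<Longrightarrow> rchild off t x y \<Longrightarrow> even x \<noteq> even y \<Longrightarrow>
   degenerate (spine_word off t as)"
proof (induction t arbitrary: off as)
  case Leaf
  then show ?case by simp
next
  case (Node l r)
  let ?as\<^sub>l = "take (tsize l) as" and ?as\<^sub>r = "drop (Suc (tsize l)) as" and ?off\<^sub>r = "Suc (off + tsize l)"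
  have l: "length ?as\<^sub>l = tsize l" "alternating_algs off ?as\<^sub>l"
    and r: "length ?as\<^sub>r = tsize r" "alternating_algs ?off\<^sub>r ?as\<^sub>r"
    using Node.prems alternating_algs_take alternating_algs_drop[of off as "Suc (tsize l)"] by auto
  consider (root) rl rr where "r = Node rl rr" "y = Suc (off + tsize l)" "x = Suc (Suc (off + tsize l + tsize rl))"
    | (left) "rchild off l x y" | (right) "rchild ?off\<^sub>r r x y"
    using Node.prems(3) by (cases r) auto
  then show ?case
  proof cases
    case root
    then show ?thesis
      using Node.prems(4) by (auto simp: degenerate_def mixed_def)
  next
    case left
    then have "kappa_tree lact \<kappa> l ?as\<^sub>l = 0"
      using kappa_tree_eq_0_if_degenerate[OF _ l] Node.IH(1)[OF l] Node.prems(4) by (cases l) auto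
    then show ?thesis by (simp add: degenerate_def)
  next
    case right
    then show ?thesis
      using Node.IH(2)[OF r] Node.prems(4) degenerate_Cons by simp
  qed
qed

lemma nth_concat_pairs:
  "k < 2 * length is \<Longrightarrow>
   concat (map (\<lambda>i. [f i, g i]) is) ! k = (if even k then f (is ! (k div 2)) else g (is ! (k div 2)))"
proof (induction "is" arbitrary: k)
  case (Cons i "is")
  show ?case
  proof (cases k)
    case (Suc k')
    then show ?thesis using Cons by (cases k') auto
  qed simp
qed simp

lemma length_concat_pairs: "length (concat (map (\<lambda>i. [f i, g i]) is)) = 2 * length is"
  by (induction "is") auto

lemma alternating_algs_concat_pairs:
  "alternating_algs 0 (concat (map (\<lambda>i. [lact (x i) a, lact (y i) b]) is))"
  unfolding alternating_algs_def
proof (intro allI impI)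
  fix k assume "k < length (concat (map (\<lambda>i. [lact (x i) a, lact (y i) b]) is))"
  then have "concat (map (\<lambda>i. [lact (x i) a, lact (y i) b]) is) ! k
      = (if even k then lact (x (is ! (k div 2))) a else lact (y (is ! (k div 2))) b)"
    by (simp add: nth_concat_pairs length_concat_pairs)
  then show "concat (map (\<lambda>i. [lact (x i) a, lact (y i) b]) is) ! k \<in> alg (even (0 + k))"
    by (auto simp: alg_def intro: B_gen.gen_lact B_gen.gen_elem)
qed

end

lemma not_splits_imp_parity_change:
  assumes "\<not> splits t"
  obtains x y where "rchild 0 t x y" and "even x \<noteq> even y"
proof -
  have "even x = even y" if "(sup (rchild 0 t) (rchild 0 t)\<inverse>\<inverse>)\<^sup>*\<^sup>* x y"
    and no_change: "\<And>x y. rchild 0 t x y \<Longrightarrow> even x = even y" for x y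
    using that(1) by (induction rule: rtranclp_induct) (auto dest: no_change)
  then show ?thesis using assms that unfolding splits_def by blast
qed

theorem lemma4:
  fixes smB :: "'k::field_char_0 \<Rightarrow> 'b::ring_1 \<Rightarrow> 'b"
    and smA :: "'k \<Rightarrow> 'a::ring_1 \<Rightarrow> 'a"
    and lact :: "'b \<Rightarrow> 'a \<Rightarrow> 'a" and ract :: "'a \<Rightarrow> 'b \<Rightarrow> 'a"
    and E :: "'a \<Rightarrow> 'b" and \<kappa> :: "'a list \<Rightarrow> 'b"
    and a b :: 'a and n :: nat and \<tau> :: ptree and x y :: "nat \<Rightarrow> 'b"
  assumes "B_prob_space smB smA lact ract E"
    and "free_pair smA lact ract E a b"
    and "is_cumulants lact E \<kappa>"
    and "n \<ge> 1"
    and "\<tau> \<in> Y (2 * n)"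
    and "\<not> splits \<tau>"
  shows "kappa_tree lact \<kappa> \<tau> (concat (map (\<lambda>i. [lact (x i) a, lact (y i) b]) [1..<n + 1])) = 0"
proof -
  interpret free_B_cumulants smB smA lact ract E \<kappa> a b
    by unfold_locales (use assms in auto)
  define as where "as = concat (map (\<lambda>i. [lact (x i) a, lact (y i) b]) [1..<n + 1])"
  have size: "length as = tsize \<tau>" "\<tau> \<noteq> Leaf"
    using assms(4,5) by (auto simp: as_def Y_def length_concat_pairs)
  have "alternating_algs 0 as"
    unfolding as_def by (rule alternating_algs_concat_pairs)
  moreover obtain u v where "rchild 0 \<tau> u v" and "even u \<noteq> even v"
    using not_splits_imp_parity_change[OF assms(6)] .
  ultimately have "degenerate (spine_word 0 \<tau> as)"
    using spine_word_degenerate size(1) by blast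
  then show ?thesis
    using kappa_tree_eq_0_if_degenerate size \<open>alternating_algs 0 as\<close> by (simp add: as_def)
qed

end
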